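(* Let $M=\{u=F(z_1,z_2,\bar z_1,\bar z_2)\}\subset\mathbb{C}^3$ be a rigid real-analytic hypersurface with $F_{z_1\bar z_1}$ nowhere zero, $F_{z_1\bar z_1}F_{z_2\bar z_2}-F_{z_2\bar z_1}F_{z_1\bar z_2}\equiv0$, and $\overline{\mathcal{L}}_1(k)$ nowhere zero, with the notation below. Define $$I_0:=-\frac13\frac{\mathcal{K}(\overline{\mathcal{L}}_1(\overline{\mathcal{L}}_1(k)))}{\overline{\mathcal{L}}_1(k)^2}+\frac13\frac{\mathcal{K}(\overline{\mathcal{L}}_1(k))\,\overline{\mathcal{L}}_1(\overline{\mathcal{L}}_1(k))}{\overline{\mathcal{L}}_1(k)^3}+\frac23\frac{\mathcal{L}_1(\mathcal{L}_1(\bar k))}{\mathcal{L}_1(\bar k)}+\frac23\frac{\mathcal{L}_1(\overline{\mathcal{L}}_1(k))}{\overline{\mathcal{L}}_1(k)},$$ $$V_0:=-\frac13\frac{\overline{\mathcal{L}}_1(\overline{\mathcal{L}}_1(\overline{\mathcal{L}}_1(k)))}{\overline{\mathcal{L}}_1(k)}+\frac59\Big(\frac{\overline{\mathcal{L}}_1(\overline{\mathcal{L}}_1(k))}{\overline{\mathcal{L}}_1(k)}\Big)^2-\frac19\frac{\overline{\mathcal{L}}_1(\overline{\mathcal{L}}_1(k))\,\bar P}{\overline{\mathcal{L}}_1(k)}+\frac13\overline{\mathcal{L}}_1(\bar P)-\frac19\bar P\bar P,$$ $$B:=\frac13\Big(\frac{\overline{\mathcal{L}}_1(\overline{\mathcal{L}}_1(k))}{\overline{\mathcal{L}}_1(k)}-\bar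 P\Big),\qquad \mathcal{Q}_0:=\frac12\overline{\mathcal{L}}_1(I_0)+\frac12 B\,I_0+\bar B\,\bar I_0-\frac12\frac{\mathcal{K}(V_0)}{\overline{\mathcal{L}}_1(k)} .$$ Then $$\mathcal{Q}_0=B\,I_0+\bar B\,\bar I_0-B\bar B+\frac23\operatorname{Re}\Big\{\mathcal{L}_1\Big[\frac{\overline{\mathcal{L}}_1(\overline{\mathcal{L}}_1(k))}{\overline{\mathcal{L}}_1(k)}\Big]\Big\}+\frac13\operatorname{Re}\big(\overline{\mathcal{L}}_1(P)\big).$$
   Context: Coordinates on $\mathbb{C}^3$ are $(z_1,z_2,w)$, $w=u+iv$; $M$ is parametrized by $(z_1,z_2,\bar z_1,\bar z_2,v)$. The vector fields are $\mathcal{L}_1:=\partial_{z_1}-iF_{z_1}\partial_v$, $\mathcal{L}_2:=\partial_{z_2}-iF_{z_2}\partial_v$, and $\overline{\mathcal{L}}_1:=\partial_{\bar z_1}+iF_{\bar z_1}\partial_v$ (complex conjugate); on functions independent of $v$ (as all functions below are) they act as $\partial_{z_1},\partial_{z_2},\partial_{\bar z_1}$ respectively. The slant function is $k:=-F_{z_2\bar z_1}/F_{z_1\bar z_1}$, $\mathcal{K}:=k\,\mathcal{L}_1+\mathcal{L}_2$, and $P:=F_{z_1z_1\bar z_1}/F_{z_1\bar z_1}$. A bar over a function denotes complex conjugation (so $\bar k,\bar P,\bar I_0,\bar B$ are the conjugates of $k,P,I_0,B$). *)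

theory Defs
  imports "HOL-Analysis.Analysis"
begin

type_synonym pt = "complex \<times> complex"

definition real_analytic_on :: "pt set \<Rightarrow> (pt \<Rightarrow> real) \<Rightarrow> bool" where
  "real_analytic_on U F \<longleftrightarrow>
     (\<forall>p\<in>U. \<exists>r>0. \<exists>c :: nat \<times> nat \<times> nat \<times> nat \<Rightarrow> real.
        \<forall>q\<in>ball p r.
          ((\<lambda>(a,b,d,e). c (a,b,d,e)
              * (Re (fst q) - Re (fst p)) ^ a * (Im (fst q) - Im (fst p)) ^ b
              * (Re (snd q) - Re (snd p)) ^ d * (Im (snd q) - Im (snd p)) ^ e)
           has_sum F q) UNIV)"

definition pdir :: "pt \<Rightarrow> (pt \<Rightarrow> complex) \<Rightarrow> pt \<Rightarrow> complex" where
  "pdir v g p = vector_derivative (\<lambda>t::real. g (p + t *\<^sub>R v)) (at 0)"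

(* Wirtinger derivatives. On functions independent of v the vector fields
   L1, L2, conj L1 act exactly as d/dz1, d/dz2, d/d(bar z1). *)
definition Dz1 :: "(pt \<Rightarrow> complex) \<Rightarrow> pt \<Rightarrow> complex" where
  "Dz1 g p = (pdir (1,0) g p - \<i> * pdir (\<i>,0) g p) / 2"
definition Dzb1 :: "(pt \<Rightarrow> complex) \<Rightarrow> pt \<Rightarrow> complex" where
  "Dzb1 g p = (pdir (1,0) g p + \<i> * pdir (\<i>,0) g p) / 2"
definition Dz2 :: "(pt \<Rightarrow> complex) \<Rightarrow> pt \<Rightarrow> complex" where
  "Dz2 g p = (pdir (0,1) g p - \<i> * pdir (0,\<i>) g p) / 2"
definition Dzb2 :: "(pt \<Rightarrow> complex) \<Rightarrow> pt \<Rightarrow> complex" where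
  "Dzb2 g p = (pdir (0,1) g p + \<i> * pdir (0,\<i>) g p) / 2"

abbreviation (input) cF :: "(pt \<Rightarrow> real) \<Rightarrow> pt \<Rightarrow> complex" where
  "cF F \<equiv> (\<lambda>p. complex_of_real (F p))"

definition slant :: "(pt \<Rightarrow> real) \<Rightarrow> pt \<Rightarrow> complex" where
  "slant F p = - Dz2 (Dzb1 (cF F)) p / Dz1 (Dzb1 (cF F)) p"

definition Pfun :: "(pt \<Rightarrow> real) \<Rightarrow> pt \<Rightarrow> complex" where
  "Pfun F p = Dz1 (Dz1 (Dzb1 (cF F))) p / Dz1 (Dzb1 (cF F)) p"

definition Kop :: "(pt \<Rightarrow> real) \<Rightarrow> (pt \<Rightarrow> complex) \<Rightarrow> pt \<Rightarrow> complex" where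
  "Kop F g p = slant F p * Dz1 g p + Dz2 g p"

definition I0 :: "(pt \<Rightarrow> real) \<Rightarrow> pt \<Rightarrow> complex" where
  "I0 F p = (let k = slant F; kb = (\<lambda>q. cnj (k q)); D = Dzb1 k in
      - 1/3 * Kop F (Dzb1 D) p / (D p)^2
      + 1/3 * Kop F D p * Dzb1 D p / (D p)^3
      + 2/3 * Dz1 (Dz1 kb) p / Dz1 kb p
      + 2/3 * Dz1 D p / D p)"

definition V0 :: "(pt \<Rightarrow> real) \<Rightarrow> pt \<Rightarrow> complex" where
  "V0 F p = (let k = slant F; D = Dzb1 k; Pb = (\<lambda>q. cnj (Pfun F q)) in
      - 1/3 * Dzb1 (Dzb1 D) p / D p
      + 5/9 * (Dzb1 D p / D p)^2
      - 1/9 * Dzb1 D p * Pb p / D p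
      + 1/3 * Dzb1 Pb p
      - 1/9 * Pb p * Pb p)"

definition Bfun :: "(pt \<Rightarrow> real) \<Rightarrow> pt \<Rightarrow> complex" where
  "Bfun F p = (let D = Dzb1 (slant F) in
      1/3 * (Dzb1 D p / D p - cnj (Pfun F p)))"

definition Q0 :: "(pt \<Rightarrow> real) \<Rightarrow> pt \<Rightarrow> complex" where
  "Q0 F p =
      1/2 * Dzb1 (I0 F) p + 1/2 * Bfun F p * I0 F p
      + cnj (Bfun F p) * cnj (I0 F p)
      - 1/2 * Kop F (V0 F) p / Dzb1 (slant F) p"

end

theory Submission
  imports Defs
begin

(* Every quantity in the statement is built from F by Wirtinger derivatives, field
   operations and complex conjugation.  Since F is real-analytic, it is locally a convergent power
   series in Re z1, Im z1, Re z2, Im z2; termwise differentiation along coordinate lines shows that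
   the partial derivatives of such functions, and of everything built from them, exist, stay in the
   same class and commute.  Hence L1, conj L1, L2 and K = k L1 + L2 behave as derivations, the
   Wirtinger operators commute, and L1 (conj g) = conj (conj L1 g).

   With this calculus: F_{z1 zb1} is real, so conj P = conj L1 (F_{z1 zb1}) / F_{z1 zb1};
   differentiating k F_{z1 zb1} = - F_{z2 zb1} in z1 gives K (F_{z1 zb1}) = - F_{z1 zb1} L1 k; and
   [conj L1, K] = (conj L1 k) L1.  Together these give K (conj P) = - (L1 conj L1 k + (conj L1 k) P)
   and show that conj L1 P is real.  Writing I0, V0 and their derivatives in terms of
   A = conj L1 (conj L1 k) / conj L1 k, the claim becomes a rational identity between finitely many
   values at the point. *)

section \<open>Derivatives along lines\<close>

definition line_differentiable :: "(pt \<Rightarrow> complex) \<Rightarrow> pt \<Rightarrow> pt \<Rightarrow> bool" where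
  "line_differentiable f p v \<longleftrightarrow> (\<lambda>t::real. f (p + t *\<^sub>R v)) differentiable (at 0)"

lemma pdir_has_vector_derivative:
  "line_differentiable f p v \<Longrightarrow> ((\<lambda>t. f (p + t *\<^sub>R v)) has_vector_derivative pdir v f p) (at 0)"
  unfolding line_differentiable_def pdir_def using vector_derivative_works by blast

lemma pdir_eqI: "((\<lambda>t. f (p + t *\<^sub>R v)) has_vector_derivative D) (at 0) \<Longrightarrow> pdir v f p = D"
  unfolding pdir_def by (rule vector_derivative_at)

lemma line_differentiableI:
  "((\<lambda>t. f (p + t *\<^sub>R v)) has_vector_derivative D) (at 0) \<Longrightarrow> line_differentiable f p v"
  unfolding line_differentiable_def differentiable_def has_vector_derivative_def by blast

lemma line_differentiable_const: "line_differentiable (\<lambda>_. c) p v"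
  by (rule line_differentiableI[OF has_vector_derivative_const])

lemma pdir_const: "pdir v (\<lambda>_. c) p = 0"
  by (rule pdir_eqI[OF has_vector_derivative_const])

lemma has_vector_derivative_line_add:
  "line_differentiable f p v \<Longrightarrow> line_differentiable g p v \<Longrightarrow>
   ((\<lambda>t. f (p + t *\<^sub>R v) + g (p + t *\<^sub>R v)) has_vector_derivative (pdir v f p + pdir v g p)) (at 0)"
  by (intro has_vector_derivative_add pdir_has_vector_derivative)

lemma line_differentiable_add:
  "line_differentiable f p v \<Longrightarrow> line_differentiable g p v \<Longrightarrow> line_differentiable (\<lambda>q. f q + g q) p v"
  using has_vector_derivative_line_add line_differentiableI by fastforce

lemma pdir_add:
  "line_differentiable f p v \<Longrightarrow> line_differentiable g p v \<Longrightarrow>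
   pdir v (\<lambda>q. f q + g q) p = pdir v f p + pdir v g p"
  using has_vector_derivative_line_add pdir_eqI by fastforce

lemma has_vector_derivative_line_mult:
  "line_differentiable f p v \<Longrightarrow> line_differentiable g p v \<Longrightarrow>
   ((\<lambda>t. f (p + t *\<^sub>R v) * g (p + t *\<^sub>R v)) has_vector_derivative
      (pdir v f p * g p + f p * pdir v g p)) (at 0)"
  using has_vector_derivative_mult[OF pdir_has_vector_derivative pdir_has_vector_derivative, of f p v g]
  by (simp add: add.commute)

lemma line_differentiable_mult:
  "line_differentiable f p v \<Longrightarrow> line_differentiable g p v \<Longrightarrow> line_differentiable (\<lambda>q. f q * g q) p v"
  using has_vector_derivative_line_mult line_differentiableI by fastforce

lemma pdir_mult:
  "line_differentiable f p v \<Longrightarrow> line_differentiable g p v \<Longrightarrow>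
   pdir v (\<lambda>q. f q * g q) p = pdir v f p * g p + f p * pdir v g p"
  using has_vector_derivative_line_mult pdir_eqI by fastforce

lemma has_vector_derivative_line_inverse:
  assumes "line_differentiable f p v" "f p \<noteq> 0"
  shows "((\<lambda>t. inverse (f (p + t *\<^sub>R v))) has_vector_derivative (- (pdir v f p * inverse (f p) ^ 2))) (at 0)"
proof -
  have "((inverse \<circ> (\<lambda>t. f (p + t *\<^sub>R v))) has_vector_derivative
          (pdir v f p * - (inverse (f p) ^ Suc (Suc 0)))) (at 0)"
    by (rule field_vector_diff_chain_at[OF pdir_has_vector_derivative[OF assms(1)]])
       (use DERIV_inverse[of "f p" UNIV] assms(2) in simp)
  then show ?thesis by (simp add: comp_def power2_eq_square)
qed

lemma line_differentiable_inverse: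
  "line_differentiable f p v \<Longrightarrow> f p \<noteq> 0 \<Longrightarrow> line_differentiable (\<lambda>q. inverse (f q)) p v"
  using has_vector_derivative_line_inverse line_differentiableI by fastforce

lemma pdir_inverse:
  "line_differentiable f p v \<Longrightarrow> f p \<noteq> 0 \<Longrightarrow>
   pdir v (\<lambda>q. inverse (f q)) p = - (pdir v f p * inverse (f p) ^ 2)"
  using has_vector_derivative_line_inverse pdir_eqI by fastforce

lemma line_differentiable_cnj: "line_differentiable f p v \<Longrightarrow> line_differentiable (\<lambda>q. cnj (f q)) p v"
  using has_vector_derivative_cnj[OF pdir_has_vector_derivative] line_differentiableI by fastforce

lemma pdir_cnj: "line_differentiable f p v \<Longrightarrow> pdir v (\<lambda>q. cnj (f q)) p = cnj (pdir v f p)"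
  using has_vector_derivative_cnj[OF pdir_has_vector_derivative] pdir_eqI by fastforce

lemma has_vector_derivative_line_cong_open:
  fixes f g :: "pt \<Rightarrow> complex"
  assumes "open U" "p \<in> U" "\<forall>q\<in>U. f q = g q"
    and "((\<lambda>t. f (p + t *\<^sub>R v)) has_vector_derivative D) (at 0)"
  shows "((\<lambda>t. g (p + t *\<^sub>R v)) has_vector_derivative D) (at 0)"
proof -
  have "open ((\<lambda>t::real. p + t *\<^sub>R v) -` U)"
    by (intro continuous_open_vimage assms(1) continuous_intros)
  then show ?thesis
    by (rule has_vector_derivative_transform_within_open[OF assms(4)]) (use assms(2,3) in auto)
qed

lemma pdir_cong_open:
  fixes f g :: "pt \<Rightarrow> complex"
  assumes "open U" "p \<in> U" "\<forall>q\<in>U. f q = g q"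
  shows "pdir v f p = pdir v g p"
proof -
  have "((\<lambda>t. f (p + t *\<^sub>R v)) has_vector_derivative D) (at 0) \<longleftrightarrow>
        ((\<lambda>t. g (p + t *\<^sub>R v)) has_vector_derivative D) (at 0)" for D
    using has_vector_derivative_line_cong_open[OF assms(1,2)] assms(3) by metis
  then show ?thesis unfolding pdir_def vector_derivative_def by simp
qed

lemma line_differentiable_cong_open:
  fixes f g :: "pt \<Rightarrow> complex"
  assumes "open U" "p \<in> U" "\<forall>q\<in>U. f q = g q" "line_differentiable f p v"
  shows "line_differentiable g p v"
  using has_vector_derivative_line_cong_open[OF assms(1-3) pdir_has_vector_derivative[OF assms(4)]]
  by (rule line_differentiableI)

section \<open>Power series in the real coordinates\<close>

type_synonym multi_index = "nat \<times> nat \<times> nat \<times> nat"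

definition exponent :: "multi_index \<Rightarrow> nat \<Rightarrow> nat" where
  "exponent \<alpha> i = (case \<alpha> of (a, b, d, e) \<Rightarrow>
     if i = 0 then a else if i = 1 then b else if i = 2 then d else e)"

definition incr_exponent :: "nat \<Rightarrow> multi_index \<Rightarrow> multi_index" where
  "incr_exponent i \<alpha> = (case \<alpha> of (a, b, d, e) \<Rightarrow>
     if i = 0 then (Suc a, b, d, e) else if i = 1 then (a, Suc b, d, e)
     else if i = 2 then (a, b, Suc d, e) else (a, b, d, Suc e))"

definition total_degree :: "multi_index \<Rightarrow> nat" where
  "total_degree \<alpha> = (\<Sum>j<4. exponent \<alpha> j)"

(* Coordinates 0..3 are Re z1, Im z1, Re z2, Im z2, in the order of the exponents in
   real_analytic_on. *)
definition coord :: "pt \<Rightarrow> nat \<Rightarrow> real" where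
  "coord q i = (if i = 0 then Re (fst q) else if i = 1 then Im (fst q)
     else if i = 2 then Re (snd q) else Im (snd q))"

definition coord_dir :: "nat \<Rightarrow> pt" where
  "coord_dir i = (if i = 0 then (1, 0) else if i = 1 then (\<i>, 0) else if i = 2 then (0, 1) else (0, \<i>))"

definition cube :: "pt \<Rightarrow> real \<Rightarrow> pt set" where
  "cube p s = {q. \<forall>j<4. \<bar>coord (q - p) j\<bar> < s}"

definition coord_monomial :: "pt \<Rightarrow> multi_index \<Rightarrow> pt \<Rightarrow> real" where
  "coord_monomial p \<alpha> q = (\<Prod>j<4. coord (q - p) j ^ exponent \<alpha> j)"

definition coord_monomial_omit :: "pt \<Rightarrow> nat \<Rightarrow> multi_index \<Rightarrow> pt \<Rightarrow> real" where
  "coord_monomial_omit p i \<alpha> q = (\<Prod>j\<in>{..<4} - {i}. coord (q - p) j ^ exponent \<alpha> j)"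

lemma less_4_cases: "(i::nat) < 4 \<Longrightarrow> i = 0 \<or> i = 1 \<or> i = 2 \<or> i = 3"
  by auto

lemma exponent_incr_exponent:
  "i < 4 \<Longrightarrow> j < 4 \<Longrightarrow> exponent (incr_exponent i \<alpha>) j = exponent \<alpha> j + (if j = i then 1 else 0)"
  by (cases \<alpha>) (auto simp: exponent_def incr_exponent_def)

lemma total_degree_incr_exponent: "i < 4 \<Longrightarrow> total_degree (incr_exponent i \<alpha>) = Suc (total_degree \<alpha>)"
  by (simp add: total_degree_def exponent_incr_exponent sum.distrib)

lemma exponent_le_total_degree: "i < 4 \<Longrightarrow> exponent \<alpha> i \<le> total_degree \<alpha>"
  unfolding total_degree_def by (rule member_le_sum) auto

lemma inj_incr_exponent: "inj (incr_exponent i)"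
  by (auto simp: inj_def incr_exponent_def split: prod.splits if_splits)

lemma range_incr_exponent: "i < 4 \<Longrightarrow> range (incr_exponent i) = {\<alpha>. exponent \<alpha> i \<noteq> 0}"
proof (intro equalityI subsetI)
  fix \<alpha> assume "i < 4" "\<alpha> \<in> {\<alpha>. exponent \<alpha> i \<noteq> 0}"
  then show "\<alpha> \<in> range (incr_exponent i)"
    by (cases \<alpha>, elim less_4_cases[elim_format] disjE)
       (auto simp: exponent_def incr_exponent_def image_iff intro!: exI[of _ "(_, _, _, _)"]
          dest!: gr0_implies_Suc)
qed (auto simp: exponent_incr_exponent)

lemma coord_scaleR_coord_dir:
  "i < 4 \<Longrightarrow> j < 4 \<Longrightarrow> coord (t *\<^sub>R coord_dir i) j = (if j = i then t else 0)"
  using less_4_cases[of i] less_4_cases[of j] by (auto simp: coord_def coord_dir_def)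

lemma coord_shift:
  assumes "i < 4" "j < 4"
  shows "coord (q + t *\<^sub>R coord_dir i - p) j = coord (q - p) j + (if j = i then t else 0)"
proof -
  have "coord (q + t *\<^sub>R coord_dir i - p) j = coord (q - p) j + coord (t *\<^sub>R coord_dir i) j"
    by (simp add: coord_def)
  then show ?thesis
    by (simp only: coord_scaleR_coord_dir[OF assms])
qed

lemma coord_monomial_split:
  "i < 4 \<Longrightarrow> coord_monomial p \<alpha> q = coord (q - p) i ^ exponent \<alpha> i * coord_monomial_omit p i \<alpha> q"
  unfolding coord_monomial_def coord_monomial_omit_def by (subst prod.remove[of _ i]) auto

lemma coord_monomial_omit_shift:
  "i < 4 \<Longrightarrow> coord_monomial_omit p i \<alpha> (q + t *\<^sub>R coord_dir i) = coord_monomial_omit p i \<alpha> q"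
  unfolding coord_monomial_omit_def by (intro prod.cong refl) (auto simp: coord_shift)

lemma coord_monomial_omit_incr_exponent:
  "i < 4 \<Longrightarrow> coord_monomial_omit p i (incr_exponent i \<alpha>) q = coord_monomial_omit p i \<alpha> q"
  unfolding coord_monomial_omit_def by (intro prod.cong refl) (auto simp: exponent_incr_exponent)

lemma abs_prod_power_le:
  fixes x :: "nat \<Rightarrow> real"
  assumes "\<And>j. j \<in> S \<Longrightarrow> \<bar>x j\<bar> \<le> \<rho>"
  shows "\<bar>\<Prod>j\<in>S. x j ^ n j\<bar> \<le> \<rho> ^ (\<Sum>j\<in>S. n j)"
proof -
  have "\<bar>\<Prod>j\<in>S. x j ^ n j\<bar> = (\<Prod>j\<in>S. \<bar>x j\<bar> ^ n j)"
    by (simp add: abs_prod power_abs)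
  also have "\<dots> \<le> (\<Prod>j\<in>S. \<rho> ^ n j)"
    by (intro prod_mono conjI power_mono) (use assms in auto)
  finally show ?thesis by (simp add: power_sum)
qed

lemma abs_coord_monomial_le:
  "(\<And>j. j < 4 \<Longrightarrow> \<bar>coord (q - p) j\<bar> \<le> \<rho>) \<Longrightarrow> \<bar>coord_monomial p \<alpha> q\<bar> \<le> \<rho> ^ total_degree \<alpha>"
  unfolding coord_monomial_def total_degree_def by (rule abs_prod_power_le) auto

lemma abs_coord_monomial_omit_le:
  assumes "\<And>j. j < 4 \<Longrightarrow> \<bar>coord (q - p) j\<bar> \<le> \<rho>" "i < 4"
  shows "\<bar>coord_monomial_omit p i \<alpha> q\<bar> * \<rho> ^ exponent \<alpha> i \<le> \<rho> ^ total_degree \<alpha>"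
proof -
  have "0 \<le> \<rho>" using assms(1)[of 0] by auto
  have "\<bar>coord_monomial_omit p i \<alpha> q\<bar> \<le> \<rho> ^ (\<Sum>j\<in>{..<4} - {i}. exponent \<alpha> j)"
    unfolding coord_monomial_omit_def by (rule abs_prod_power_le) (use assms in auto)
  then have "\<bar>coord_monomial_omit p i \<alpha> q\<bar> * \<rho> ^ exponent \<alpha> i
      \<le> \<rho> ^ (\<Sum>j\<in>{..<4} - {i}. exponent \<alpha> j) * \<rho> ^ exponent \<alpha> i"
    by (rule mult_right_mono) (use \<open>0 \<le> \<rho>\<close> in simp)
  also have "\<dots> = \<rho> ^ total_degree \<alpha>"
    unfolding total_degree_def using assms(2)
    by (subst (2) sum.remove[of _ i]) (auto simp: power_add mult.commute)
  finally show ?thesis .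
qed

lemma cube_shrink: "q \<in> cube p s \<Longrightarrow> \<exists>s'. 0 < s' \<and> s' < s \<and> q \<in> cube p s'"
proof -
  assume q: "q \<in> cube p s"
  define m where "m = Max ((\<lambda>j. \<bar>coord (q - p) j\<bar>) ` {..<4})"
  have "m < s" using q unfolding m_def cube_def by (subst Max_less_iff) (auto simp: lessThan_empty_iff)
  moreover have m: "\<bar>coord (q - p) j\<bar> \<le> m" if "j < 4" for j
    unfolding m_def by (rule Max_ge) (use that in auto)
  moreover have "0 \<le> m" using m[of 0] by auto
  moreover have "q \<in> cube p ((m + s) / 2)"
    unfolding cube_def mem_Collect_eq
  proof (intro allI impI)
    fix j :: nat assume "j < 4"
    have "m < (m + s) / 2" using \<open>m < s\<close> by simp
    with m[OF \<open>j < 4\<close>] show "\<bar>coord (q - p) j\<bar> < (m + s) / 2" by (rule le_less_trans)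
  qed
  ultimately show ?thesis by (intro exI[of _ "(m + s) / 2"]) auto
qed

lemma cube_mono: "s \<le> s' \<Longrightarrow> cube p s \<subseteq> cube p s'"
  by (auto simp: cube_def)


lemma bounded_sq_times_power:
  fixes r :: real
  assumes "0 \<le> r" "r < 1"
  obtains C where "\<And>n. real n ^ 2 * r ^ n \<le> C"
proof -
  have "(\<lambda>n. of_nat n * sqrt r ^ n) \<longlonglongrightarrow> 0"
    by (rule powser_times_n_limit_0) (use assms in \<open>simp add: real_sqrt_lt_1_iff\<close>)
  then have "(\<lambda>n. (of_nat n * sqrt r ^ n) * (of_nat n * sqrt r ^ n)) \<longlonglongrightarrow> 0 * 0"
    by (intro tendsto_mult)
  moreover have "(of_nat n * sqrt r ^ n) * (of_nat n * sqrt r ^ n) = real n ^ 2 * r ^ n" for n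
  proof -
    have "sqrt r ^ n * sqrt r ^ n = r ^ n"
      using assms(1) by (simp flip: power_mult_distrib)
    moreover have "(of_nat n * sqrt r ^ n) * (of_nat n * sqrt r ^ n) = real n ^ 2 * (sqrt r ^ n * sqrt r ^ n)"
      by (simp add: power2_eq_square mult_ac)
    ultimately show ?thesis by simp
  qed
  ultimately have "convergent (\<lambda>n. real n ^ 2 * r ^ n)"
    by (auto simp: convergent_def)
  then have "Bseq (\<lambda>n. real n ^ 2 * r ^ n)"
    by (rule convergent_imp_Bseq)
  then obtain K where "\<forall>n. norm (real n ^ 2 * r ^ n) \<le> K"
    by (auto simp: Bseq_def)
  then show ?thesis
    using that by (auto dest: abs_le_D1)
qed

lemma summable_on_degree_sq_weighted:
  fixes c :: "'a \<Rightarrow> 'b::real_normed_vector" and deg :: "'a \<Rightarrow> nat"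
  assumes "(\<lambda>\<alpha>. norm (c \<alpha>) * s ^ deg \<alpha>) summable_on A" "0 < \<rho>" "\<rho> < s"
  shows "(\<lambda>\<alpha>. norm (c \<alpha>) * real (deg \<alpha>) ^ 2 * \<rho> ^ deg \<alpha>) summable_on A"
proof -
  obtain C where C: "\<And>n. real n ^ 2 * (\<rho> / s) ^ n \<le> C"
    using bounded_sq_times_power[of "\<rho> / s"] assms(2,3) by auto
  have "(\<lambda>\<alpha>. C * (norm (c \<alpha>) * s ^ deg \<alpha>)) summable_on A"
    by (rule summable_on_cmult_right[OF assms(1)])
  then show ?thesis
  proof (rule summable_on_comparison_test)
    fix \<alpha>
    have "real (deg \<alpha>) ^ 2 * \<rho> ^ deg \<alpha> = (real (deg \<alpha>) ^ 2 * (\<rho> / s) ^ deg \<alpha>) * s ^ deg \<alpha>"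
      using assms(2,3) by (simp add: power_divide)
    also have "\<dots> \<le> C * s ^ deg \<alpha>"
      using C assms(2,3) by (intro mult_right_mono) auto
    finally have "norm (c \<alpha>) * (real (deg \<alpha>) ^ 2 * \<rho> ^ deg \<alpha>) \<le> norm (c \<alpha>) * (C * s ^ deg \<alpha>)"
      by (rule mult_left_mono) simp
    then show "norm (c \<alpha>) * real (deg \<alpha>) ^ 2 * \<rho> ^ deg \<alpha> \<le> C * (norm (c \<alpha>) * s ^ deg \<alpha>)"
      by (simp add: mult_ac)
    show "0 \<le> norm (c \<alpha>) * real (deg \<alpha>) ^ 2 * \<rho> ^ deg \<alpha>"
      using assms(2) by simp
  qed
qed

lemma power_taylor_remainder_bound:
  fixes x h \<rho> :: real
  assumes "\<bar>x\<bar> \<le> \<rho>" "\<bar>x + h\<bar> \<le> \<rho>" "0 < \<rho>"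
  shows "\<bar>(x + h) ^ n - x ^ n - real n * h * x ^ (n - 1)\<bar> * \<rho>\<^sup>2 \<le> real n ^ 2 * h\<^sup>2 * \<rho> ^ n"
proof (induction n)
  case (Suc n)
  define r where "r = (x + h) ^ n - x ^ n - real n * h * x ^ (n - 1)"
  have "(x + h) ^ Suc n - x ^ Suc n - real (Suc n) * h * x ^ n = (x + h) * r + real n * h\<^sup>2 * x ^ (n - 1)"
    by (cases n) (simp_all add: r_def algebra_simps power2_eq_square)
  then have "\<bar>(x + h) ^ Suc n - x ^ Suc n - real (Suc n) * h * x ^ (Suc n - 1)\<bar> * \<rho>\<^sup>2
      = \<bar>(x + h) * r + real n * h\<^sup>2 * x ^ (n - 1)\<bar> * \<rho>\<^sup>2"
    by simp
  also have "\<dots> \<le> (\<bar>x + h\<bar> * \<bar>r\<bar> + real n * h\<^sup>2 * \<bar>x ^ (n - 1)\<bar>) * \<rho>\<^sup>2"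
    by (intro mult_right_mono order_trans[OF abs_triangle_ineq]) (auto simp: abs_mult)
  also have "\<dots> = \<bar>x + h\<bar> * (\<bar>r\<bar> * \<rho>\<^sup>2) + real n * h\<^sup>2 * (\<bar>x ^ (n - 1)\<bar> * \<rho>\<^sup>2)"
    by (simp add: algebra_simps)
  also have "\<dots> \<le> \<rho> * (real n ^ 2 * h\<^sup>2 * \<rho> ^ n) + real n * h\<^sup>2 * \<rho> ^ Suc n"
  proof (rule add_mono)
    have "\<bar>r\<bar> * \<rho>\<^sup>2 \<le> real n ^ 2 * h\<^sup>2 * \<rho> ^ n"
      using Suc by (simp add: r_def)
    with assms(2) show "\<bar>x + h\<bar> * (\<bar>r\<bar> * \<rho>\<^sup>2) \<le> \<rho> * (real n ^ 2 * h\<^sup>2 * \<rho> ^ n)"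
      by (rule mult_mono) (use assms(3) in auto)
    have "\<bar>x ^ (n - 1)\<bar> * \<rho>\<^sup>2 \<le> \<rho> ^ Suc n" if "n = Suc m" for m
    proof -
      have "\<bar>x\<bar> ^ m \<le> \<rho> ^ m"
        by (rule power_mono) (use assms in auto)
      then show ?thesis
        using that assms(3) by (simp add: power_abs power2_eq_square mult_right_mono)
    qed
    then show "real n * h\<^sup>2 * (\<bar>x ^ (n - 1)\<bar> * \<rho>\<^sup>2) \<le> real n * h\<^sup>2 * \<rho> ^ Suc n"
      by (cases n) (auto intro: mult_left_mono)
  qed
  also have "\<dots> = (real n ^ 2 + real n) * h\<^sup>2 * \<rho> ^ Suc n"
    by (simp add: algebra_simps)
  also have "\<dots> \<le> real (Suc n) ^ 2 * h\<^sup>2 * \<rho> ^ Suc n"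
    using assms(3) by (intro mult_right_mono) (auto simp: power2_eq_square algebra_simps)
  finally show ?case .
qed simp

lemma has_sum_diff:
  fixes f g :: "'a \<Rightarrow> 'b::topological_ab_group_add"
  assumes "(f has_sum a) A" "(g has_sum b) A"
  shows "((\<lambda>x. f x - g x) has_sum (a - b)) A"
proof -
  have "((\<lambda>x. - g x) has_sum - b) A"
    using assms(2) by (simp add: has_sum_uminus)
  from has_sum_add[OF assms(1) this] show ?thesis
    by simp
qed

lemma has_vector_derivative_at_0_quadratic_error:
  fixes \<phi> :: "real \<Rightarrow> 'a::real_normed_vector"
  assumes "0 < \<delta>" "0 \<le> M"
    and err: "\<And>h. \<bar>h\<bar> < \<delta> \<Longrightarrow> norm (\<phi> h - \<phi> 0 - h *\<^sub>R G) \<le> M * h\<^sup>2"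
  shows "(\<phi> has_vector_derivative G) (at 0)"
  unfolding has_vector_derivative_def has_derivative_at_alt
proof (intro conjI allI impI bounded_linear_scaleR_left)
  fix e :: real assume "0 < e"
  define d where "d = min \<delta> (e / (M + 1))"
  have "norm (\<phi> y - \<phi> 0 - y *\<^sub>R G) \<le> e * norm y" if y: "norm y < d" for y
  proof -
    have "norm (\<phi> y - \<phi> 0 - y *\<^sub>R G) \<le> (M * \<bar>y\<bar>) * \<bar>y\<bar>"
      using err[of y] y by (simp add: d_def power2_eq_square abs_mult_self_eq mult.assoc)
    also have "\<dots> \<le> e * \<bar>y\<bar>"
    proof (rule mult_right_mono)
      have "M * \<bar>y\<bar> \<le> (M + 1) * (e / (M + 1))"
        using y assms(2) by (intro mult_mono) (auto simp: d_def)
      then show "M * \<bar>y\<bar> \<le> e" using assms(2) by simp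
    qed simp
    finally show ?thesis by simp
  qed
  moreover have "0 < d" using assms(1,2) \<open>0 < e\<close> by (simp add: d_def)
  ultimately show "\<exists>d>0. \<forall>y. norm (y - 0) < d \<longrightarrow> norm (\<phi> y - \<phi> 0 - (y - 0) *\<^sub>R G) \<le> e * norm (y - 0)"
    by auto
qed

definition has_power_series :: "pt \<Rightarrow> real \<Rightarrow> (multi_index \<Rightarrow> complex) \<Rightarrow> (pt \<Rightarrow> complex) \<Rightarrow> bool" where
  "has_power_series p s c g \<longleftrightarrow> 0 < s \<and> (\<lambda>\<alpha>. norm (c \<alpha>) * s ^ total_degree \<alpha>) summable_on UNIV \<and>
     (\<forall>q\<in>cube p s. ((\<lambda>\<alpha>. c \<alpha> * of_real (coord_monomial p \<alpha> q)) has_sum g q) UNIV)"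

definition deriv_coeffs :: "nat \<Rightarrow> (multi_index \<Rightarrow> complex) \<Rightarrow> multi_index \<Rightarrow> complex" where
  "deriv_coeffs i c \<alpha> = of_nat (Suc (exponent \<alpha> i)) * c (incr_exponent i \<alpha>)"

lemma deriv_coeffs_commute:
  "i < 4 \<Longrightarrow> j < 4 \<Longrightarrow> deriv_coeffs i (deriv_coeffs j c) = deriv_coeffs j (deriv_coeffs i c)"
  by (rule ext, rename_tac \<alpha>, case_tac \<alpha>)
     (use less_4_cases[of i] less_4_cases[of j] in
       \<open>auto simp: deriv_coeffs_def incr_exponent_def exponent_def algebra_simps\<close>)

lemma summable_on_deriv_coeffs:
  assumes "has_power_series p s c g" "0 < s'" "s' < s" "i < 4"
  shows "(\<lambda>\<beta>. norm (deriv_coeffs i c \<beta>) * s' ^ total_degree \<beta>) summable_on UNIV"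
proof -
  define f where "f \<alpha> = norm (c \<alpha>) * real (exponent \<alpha> i) * s' ^ (total_degree \<alpha> - 1)" for \<alpha>
  have "(\<lambda>\<alpha>. (1 / s') * (norm (c \<alpha>) * real (total_degree \<alpha>) ^ 2 * s' ^ total_degree \<alpha>)) summable_on UNIV"
    using assms by (intro summable_on_cmult_right summable_on_degree_sq_weighted)
      (auto simp: has_power_series_def)
  then have "f summable_on UNIV"
  proof (rule summable_on_comparison_test)
    fix \<alpha>
    have le: "exponent \<alpha> i \<le> total_degree \<alpha>"
      using assms(4) by (rule exponent_le_total_degree)
    have "real (exponent \<alpha> i) * s' ^ (total_degree \<alpha> - 1)
        \<le> (1 / s') * (real (total_degree \<alpha>) ^ 2 * s' ^ total_degree \<alpha>)"
    proof (cases "total_degree \<alpha>")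
      case (Suc m)
      have "real (exponent \<alpha> i) \<le> real (total_degree \<alpha>) ^ 2"
        using le by (simp add: power2_eq_square) (metis le_square le_trans of_nat_le_iff of_nat_mult)
      then have "real (exponent \<alpha> i) * s' ^ m \<le> real (total_degree \<alpha>) ^ 2 * s' ^ m"
        using assms(2) by (intro mult_right_mono) auto
      then show ?thesis using Suc assms(2) by (simp add: field_simps)
    qed (use le in simp)
    then have "norm (c \<alpha>) * (real (exponent \<alpha> i) * s' ^ (total_degree \<alpha> - 1))
        \<le> norm (c \<alpha>) * ((1 / s') * (real (total_degree \<alpha>) ^ 2 * s' ^ total_degree \<alpha>))"
      by (rule mult_left_mono) simp
    then show "f \<alpha> \<le> (1 / s') * (norm (c \<alpha>) * real (total_degree \<alpha>) ^ 2 * s' ^ total_degree \<alpha>)"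
      by (simp add: f_def mult_ac)
    show "0 \<le> f \<alpha>"
      using assms(2) by (simp add: f_def)
  qed
  then have "f summable_on range (incr_exponent i)"
    by (rule summable_on_subset_banach) auto
  then have "(f \<circ> incr_exponent i) summable_on UNIV"
    by (simp add: summable_on_reindex[OF inj_incr_exponent])
  moreover have "(f \<circ> incr_exponent i) \<beta> = norm (deriv_coeffs i c \<beta>) * s' ^ total_degree \<beta>" for \<beta>
    using assms(4)
    by (simp add: f_def deriv_coeffs_def exponent_incr_exponent total_degree_incr_exponent
        norm_mult del: of_nat_Suc)
  ultimately show ?thesis by (simp add: comp_def)
qed

lemma deriv_series_has_sum:
  assumes "has_power_series p s c g" "i < 4" "q \<in> cube p s"
  obtains G where "((\<lambda>\<beta>. deriv_coeffs i c \<beta> * of_real (coord_monomial p \<beta> q)) has_sum G) UNIV"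
proof -
  obtain s' where s': "0 < s'" "s' < s" "q \<in> cube p s'"
    using cube_shrink[OF assms(3)] by blast
  have "(\<lambda>\<beta>. deriv_coeffs i c \<beta> * of_real (coord_monomial p \<beta> q)) summable_on UNIV"
  proof (rule abs_summable_summable, rule summable_on_comparison_test)
    show "(\<lambda>\<beta>. norm (deriv_coeffs i c \<beta>) * s' ^ total_degree \<beta>) summable_on UNIV"
      by (rule summable_on_deriv_coeffs[OF assms(1) s'(1,2) assms(2)])
    fix \<beta>
    have "\<bar>coord_monomial p \<beta> q\<bar> \<le> s' ^ total_degree \<beta>"
      by (rule abs_coord_monomial_le) (use s'(3) in \<open>auto simp: cube_def less_imp_le\<close>)
    then show "norm (deriv_coeffs i c \<beta> * of_real (coord_monomial p \<beta> q))
        \<le> norm (deriv_coeffs i c \<beta>) * s' ^ total_degree \<beta>"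
      by (simp add: norm_mult mult_left_mono)
  qed simp
  then show ?thesis
    using that by (auto simp: summable_on_def)
qed

(* Re-indexing by incr_exponent i turns the series with coefficients deriv_coeffs i c into the
   termwise i-th partial derivative of the series with coefficients c. *)
lemma has_sum_deriv_coeffs_iff:
  assumes "i < 4"
  shows "((\<lambda>\<beta>. deriv_coeffs i c \<beta> * of_real (coord_monomial p \<beta> q)) has_sum G) UNIV \<longleftrightarrow>
    ((\<lambda>\<alpha>. c \<alpha> * of_real (real (exponent \<alpha> i) * coord (q - p) i ^ (exponent \<alpha> i - 1)
        * coord_monomial_omit p i \<alpha> q)) has_sum G) UNIV"
    (is "_ \<longleftrightarrow> (?d has_sum G) UNIV")
proof -
  have "(?d has_sum G) UNIV \<longleftrightarrow> (?d has_sum G) (range (incr_exponent i))"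
    by (rule has_sum_cong_neutral) (auto simp: range_incr_exponent[OF assms])
  also have "\<dots> \<longleftrightarrow> ((?d \<circ> incr_exponent i) has_sum G) UNIV"
    by (rule has_sum_reindex[OF inj_incr_exponent])
  also have "?d \<circ> incr_exponent i = (\<lambda>\<beta>. deriv_coeffs i c \<beta> * of_real (coord_monomial p \<beta> q))"
    using assms
    by (auto simp: deriv_coeffs_def coord_monomial_split exponent_incr_exponent
        coord_monomial_omit_incr_exponent mult_ac)
  finally show ?thesis ..
qed

lemma coord_monomial_remainder_bound:
  assumes "i < 4" "\<And>j. j < 4 \<Longrightarrow> \<bar>coord (q - p) j\<bar> \<le> \<rho>" "\<bar>coord (q - p) i + h\<bar> \<le> \<rho>" "0 < \<rho>"
  shows "\<bar>coord_monomial p \<alpha> (q + h *\<^sub>R coord_dir i) - coord_monomial p \<alpha> q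
      - h * (real (exponent \<alpha> i) * coord (q - p) i ^ (exponent \<alpha> i - 1) * coord_monomial_omit p i \<alpha> q)\<bar>
      * \<rho>\<^sup>2 \<le> real (total_degree \<alpha>) ^ 2 * h\<^sup>2 * \<rho> ^ total_degree \<alpha>"
proof -
  define x a R where "x = coord (q - p) i" and "a = exponent \<alpha> i"
    and "R = coord_monomial_omit p i \<alpha> q"
  have eq: "coord_monomial p \<alpha> (q + h *\<^sub>R coord_dir i) - coord_monomial p \<alpha> q
      - h * (real a * x ^ (a - 1) * R) = ((x + h) ^ a - x ^ a - real a * h * x ^ (a - 1)) * R"
    using assms(1)
    by (simp add: coord_monomial_split coord_monomial_omit_shift coord_shift x_def a_def R_def
        algebra_simps)
  have "\<bar>coord_monomial p \<alpha> (q + h *\<^sub>R coord_dir i) - coord_monomial p \<alpha> q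
      - h * (real a * x ^ (a - 1) * R)\<bar> * \<rho>\<^sup>2
      = (\<bar>(x + h) ^ a - x ^ a - real a * h * x ^ (a - 1)\<bar> * \<rho>\<^sup>2) * \<bar>R\<bar>"
    unfolding eq by (simp only: abs_mult mult_ac)
  also have "\<dots> \<le> (real a ^ 2 * h\<^sup>2 * \<rho> ^ a) * \<bar>R\<bar>"
    by (intro mult_right_mono power_taylor_remainder_bound) (use assms in \<open>auto simp: x_def\<close>)
  also have "\<dots> = real a ^ 2 * h\<^sup>2 * (\<bar>R\<bar> * \<rho> ^ a)"
    by (simp add: mult_ac)
  also have "\<dots> \<le> real a ^ 2 * h\<^sup>2 * \<rho> ^ total_degree \<alpha>"
    using abs_coord_monomial_omit_le[OF assms(2,1)] by (simp add: R_def a_def mult_left_mono)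
  also have "\<dots> \<le> real (total_degree \<alpha>) ^ 2 * h\<^sup>2 * \<rho> ^ total_degree \<alpha>"
    using exponent_le_total_degree[OF assms(1), of \<alpha>] assms(4)
    by (intro mult_right_mono) (auto simp: a_def)
  finally show ?thesis
    by (simp only: x_def a_def R_def)
qed

lemma has_power_series_quadratic_error:
  fixes p q :: pt and i :: nat
  defines "D \<equiv> \<lambda>\<alpha>. real (exponent \<alpha> i) * coord (q - p) i ^ (exponent \<alpha> i - 1) * coord_monomial_omit p i \<alpha> q"
  assumes ps: "has_power_series p s c g" and i: "i < 4" and q: "q \<in> cube p s'"
    and s': "0 < s'" "s' < \<rho>" "\<rho> < s" and h: "\<bar>h\<bar> < \<rho> - s'"
    and G: "((\<lambda>\<alpha>. c \<alpha> * of_real (D \<alpha>)) has_sum G) UNIV"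
    and M: "((\<lambda>\<alpha>. norm (c \<alpha>) * real (total_degree \<alpha>) ^ 2 * \<rho> ^ total_degree \<alpha>) has_sum M) UNIV"
  shows "norm (g (q + h *\<^sub>R coord_dir i) - g q - of_real h * G) \<le> h\<^sup>2 / \<rho>\<^sup>2 * M"
proof -
  have "q \<in> cube p s" "q + h *\<^sub>R coord_dir i \<in> cube p s"
    using q s' h i by (auto simp: cube_def coord_shift)
  then have "((\<lambda>\<alpha>. c \<alpha> * of_real (coord_monomial p \<alpha> (q + h *\<^sub>R coord_dir i))
      - c \<alpha> * of_real (coord_monomial p \<alpha> q) - of_real h * (c \<alpha> * of_real (D \<alpha>)))
      has_sum (g (q + h *\<^sub>R coord_dir i) - g q - of_real h * G)) UNIV"
    using ps by (intro has_sum_diff has_sum_cmult_right G) (auto simp: has_power_series_def)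
  then have diff: "((\<lambda>\<alpha>. c \<alpha> * of_real (coord_monomial p \<alpha> (q + h *\<^sub>R coord_dir i)
      - coord_monomial p \<alpha> q - h * D \<alpha>)) has_sum (g (q + h *\<^sub>R coord_dir i) - g q - of_real h * G)) UNIV"
    by (simp add: algebra_simps)
  show ?thesis
  proof (rule norm_infsum_le[OF diff has_sum_cmult_right[OF M]])
    fix \<alpha>
    have "\<bar>coord (q - p) j\<bar> \<le> \<rho>" if "j < 4" for j
      using q that s' by (force simp: cube_def)
    moreover have "\<bar>coord (q - p) i + h\<bar> \<le> \<rho>"
      using q h i by (force simp: cube_def)
    ultimately have "\<bar>coord_monomial p \<alpha> (q + h *\<^sub>R coord_dir i) - coord_monomial p \<alpha> q - h * D \<alpha>\<bar> * \<rho>\<^sup>2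
        \<le> real (total_degree \<alpha>) ^ 2 * h\<^sup>2 * \<rho> ^ total_degree \<alpha>"
      unfolding D_def using i s' by (intro coord_monomial_remainder_bound) auto
    then have "\<bar>coord_monomial p \<alpha> (q + h *\<^sub>R coord_dir i) - coord_monomial p \<alpha> q - h * D \<alpha>\<bar>
        \<le> h\<^sup>2 / \<rho>\<^sup>2 * (real (total_degree \<alpha>) ^ 2 * \<rho> ^ total_degree \<alpha>)"
      using s' by (simp add: field_simps)
    then have "norm (c \<alpha>) * \<bar>coord_monomial p \<alpha> (q + h *\<^sub>R coord_dir i) - coord_monomial p \<alpha> q - h * D \<alpha>\<bar>
        \<le> norm (c \<alpha>) * (h\<^sup>2 / \<rho>\<^sup>2 * (real (total_degree \<alpha>) ^ 2 * \<rho> ^ total_degree \<alpha>))"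
      by (rule mult_left_mono) simp
    then show "norm (c \<alpha> * of_real (coord_monomial p \<alpha> (q + h *\<^sub>R coord_dir i)
        - coord_monomial p \<alpha> q - h * D \<alpha>))
        \<le> h\<^sup>2 / \<rho>\<^sup>2 * (norm (c \<alpha>) * real (total_degree \<alpha>) ^ 2 * \<rho> ^ total_degree \<alpha>)"
      unfolding norm_mult norm_of_real by (simp only: mult_ac)
  qed
qed

lemma has_power_series_has_vector_derivative:
  assumes ps: "has_power_series p s c g" and q: "q \<in> cube p s" and i: "i < 4"
    and G: "((\<lambda>\<beta>. deriv_coeffs i c \<beta> * of_real (coord_monomial p \<beta> q)) has_sum G) UNIV"
  shows "((\<lambda>t. g (q + t *\<^sub>R coord_dir i)) has_vector_derivative G) (at 0)"
proof -
  obtain s' where s': "0 < s'" "s' < s" "q \<in> cube p s'"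
    using cube_shrink[OF q] by blast
  define \<rho> where "\<rho> = (s + s') / 2"
  have \<rho>: "0 < \<rho>" "\<rho> < s" "s' < \<rho>"
    using s' by (auto simp: \<rho>_def)
  define M where "M = (\<Sum>\<^sub>\<infinity>\<alpha>. norm (c \<alpha>) * real (total_degree \<alpha>) ^ 2 * \<rho> ^ total_degree \<alpha>)"
  have M: "((\<lambda>\<alpha>. norm (c \<alpha>) * real (total_degree \<alpha>) ^ 2 * \<rho> ^ total_degree \<alpha>) has_sum M) UNIV"
    unfolding M_def using ps \<rho>
    by (intro has_sum_infsum summable_on_degree_sq_weighted) (auto simp: has_power_series_def)
  have "0 \<le> M"
    using M by (rule has_sum_nonneg) (use \<rho> in auto)
  have G': "((\<lambda>\<alpha>. c \<alpha> * of_real (real (exponent \<alpha> i) * coord (q - p) i ^ (exponent \<alpha> i - 1)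
      * coord_monomial_omit p i \<alpha> q)) has_sum G) UNIV"
    using G has_sum_deriv_coeffs_iff[OF i] by simp
  show ?thesis
  proof (rule has_vector_derivative_at_0_quadratic_error)
    show "0 < \<rho> - s'" "0 \<le> M / \<rho>\<^sup>2"
      using \<rho> \<open>0 \<le> M\<close> by auto
    fix h :: real
    assume "\<bar>h\<bar> < \<rho> - s'"
    from has_power_series_quadratic_error[OF ps i s'(3) s'(1) \<rho>(3) \<rho>(2) this G' M]
    show "norm (g (q + h *\<^sub>R coord_dir i) - g (q + 0 *\<^sub>R coord_dir i) - h *\<^sub>R G) \<le> M / \<rho>\<^sup>2 * h\<^sup>2"
      by (simp add: scaleR_conv_of_real mult.commute)
  qed
qed

lemma has_power_series_pdir:
  assumes "has_power_series p s c g" "0 < s'" "s' < s" "i < 4"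
  shows "has_power_series p s' (deriv_coeffs i c) (pdir (coord_dir i) g)"
  unfolding has_power_series_def
proof (intro conjI ballI summable_on_deriv_coeffs[OF assms] \<open>0 < s'\<close>)
  fix q assume "q \<in> cube p s'"
  then have q: "q \<in> cube p s"
    using cube_mono[of s' s p] assms(3) by auto
  obtain G where G: "((\<lambda>\<beta>. deriv_coeffs i c \<beta> * of_real (coord_monomial p \<beta> q)) has_sum G) UNIV"
    using deriv_series_has_sum[OF assms(1,4) q] .
  moreover have "pdir (coord_dir i) g q = G"
    by (rule pdir_eqI[OF has_power_series_has_vector_derivative[OF assms(1) q assms(4) G]])
  ultimately show "((\<lambda>\<beta>. deriv_coeffs i c \<beta> * of_real (coord_monomial p \<beta> q)) has_sum
      pdir (coord_dir i) g q) UNIV"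
    by simp
qed

lemma has_power_series_line_differentiable:
  assumes "has_power_series p s c g" "q \<in> cube p s" "i < 4"
  shows "line_differentiable g q (coord_dir i)"
proof -
  obtain G where "((\<lambda>\<beta>. deriv_coeffs i c \<beta> * of_real (coord_monomial p \<beta> q)) has_sum G) UNIV"
    using deriv_series_has_sum[OF assms(1,3,2)] .
  then show ?thesis
    by (rule line_differentiableI[OF has_power_series_has_vector_derivative[OF assms]])
qed

lemma has_power_series_unique_value:
  assumes "has_power_series p s c g" "has_power_series p s' c g'" "q \<in> cube p s" "q \<in> cube p s'"
  shows "g q = g' q"
proof -
  have "((\<lambda>\<alpha>. c \<alpha> * of_real (coord_monomial p \<alpha> q)) has_sum g q) UNIV"
    and "((\<lambda>\<alpha>. c \<alpha> * of_real (coord_monomial p \<alpha> q)) has_sum g' q) UNIV"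
    using assms by (auto simp: has_power_series_def)
  then show ?thesis
    by (rule has_sum_unique)
qed

definition locally_power_series :: "pt set \<Rightarrow> (pt \<Rightarrow> complex) \<Rightarrow> bool" where
  "locally_power_series U g \<longleftrightarrow> (\<forall>q\<in>U. \<exists>p s c. has_power_series p s c g \<and> q \<in> cube p s)"

lemma locally_power_series_pdir:
  assumes "locally_power_series U g" "i < 4"
  shows "locally_power_series U (pdir (coord_dir i) g)"
  unfolding locally_power_series_def
proof
  fix q assume "q \<in> U"
  then obtain p s c where ps: "has_power_series p s c g" "q \<in> cube p s"
    using assms(1) by (auto simp: locally_power_series_def)
  moreover obtain s' where "0 < s'" "s' < s" "q \<in> cube p s'"
    using cube_shrink[OF ps(2)] by blast
  ultimately show "\<exists>p s c. has_power_series p s c (pdir (coord_dir i) g) \<and> q \<in> cube p s"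
    using has_power_series_pdir assms(2) by blast
qed

lemma locally_power_series_line_differentiable:
  assumes "locally_power_series U g" "q \<in> U" "i < 4"
  shows "line_differentiable g q (coord_dir i)"
proof -
  obtain p s c where "has_power_series p s c g" "q \<in> cube p s"
    using assms(1,2) by (auto simp: locally_power_series_def)
  then show ?thesis
    using assms(3) by (rule has_power_series_line_differentiable)
qed

lemma locally_power_series_pdir_commute:
  assumes "locally_power_series U g" "q \<in> U" "i < 4" "j < 4"
  shows "pdir (coord_dir i) (pdir (coord_dir j) g) q = pdir (coord_dir j) (pdir (coord_dir i) g) q"
proof -
  obtain p s c where ps: "has_power_series p s c g" "q \<in> cube p s"
    using assms(1,2) by (auto simp: locally_power_series_def)
  obtain s' where s': "0 < s'" "s' < s" "q \<in> cube p s'"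
    using cube_shrink[OF ps(2)] by blast
  obtain s'' where s'': "0 < s''" "s'' < s'" "q \<in> cube p s''"
    using cube_shrink[OF s'(3)] by blast
  have "has_power_series p s'' (deriv_coeffs i (deriv_coeffs j c)) (pdir (coord_dir i) (pdir (coord_dir j) g))"
    using ps(1) s' s'' assms(3,4) by (intro has_power_series_pdir)
  moreover have "has_power_series p s'' (deriv_coeffs i (deriv_coeffs j c)) (pdir (coord_dir j) (pdir (coord_dir i) g))"
    unfolding deriv_coeffs_commute[OF assms(3,4)]
    using ps(1) s' s'' assms(3,4) by (intro has_power_series_pdir)
  ultimately show ?thesis
    by (rule has_power_series_unique_value[OF _ _ s''(3) s''(3)])
qed

lemma real_analytic_series_eq:
  "(\<lambda>(a, b, d, e). c (a, b, d, e)
      * (Re (fst x) - Re (fst q)) ^ a * (Im (fst x) - Im (fst q)) ^ b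
      * (Re (snd x) - Re (snd q)) ^ d * (Im (snd x) - Im (snd q)) ^ e)
   = (\<lambda>\<alpha>. c \<alpha> * coord_monomial q \<alpha> x)"
  by (rule ext)
     (auto simp: coord_monomial_def coord_def exponent_def eval_nat_numeral mult_ac split: prod.splits)

lemma dist_le_of_coord_le:
  assumes "\<And>j. j < 4 \<Longrightarrow> \<bar>coord (x - q) j\<bar> \<le> s"
  shows "dist q x \<le> 4 * s"
proof -
  have "dist q x = norm (x - q)"
    by (simp add: dist_norm norm_minus_commute)
  also have "\<dots> \<le> norm (fst (x - q)) + norm (snd (x - q))"
    by (metis norm_Pair_le prod.collapse)
  also have "\<dots> \<le> (\<bar>coord (x - q) 0\<bar> + \<bar>coord (x - q) 1\<bar>) + (\<bar>coord (x - q) 2\<bar> + \<bar>coord (x - q) 3\<bar>)"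
    by (intro add_mono)
       (use cmod_le[of "fst x - fst q"] cmod_le[of "snd x - snd q"] in \<open>auto simp: coord_def\<close>)
  also have "\<dots> \<le> 4 * s"
    using assms[of 0] assms[of 1] assms[of 2] assms[of 3] by linarith
  finally show ?thesis .
qed

(* Absolute convergence comes from convergence at the corner, where every coordinate equals s. *)
lemma has_power_series_of_closed_cube:
  fixes c :: "multi_index \<Rightarrow> real"
  assumes "0 < s"
    and rep: "\<And>x. (\<And>j. j < 4 \<Longrightarrow> \<bar>coord (x - q) j\<bar> \<le> s) \<Longrightarrow>
      ((\<lambda>\<alpha>. c \<alpha> * coord_monomial q \<alpha> x) has_sum G x) UNIV"
  shows "has_power_series q s (\<lambda>\<alpha>. complex_of_real (c \<alpha>)) (\<lambda>x. complex_of_real (G x))"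
  unfolding has_power_series_def
proof (intro conjI ballI \<open>0 < s\<close>)
  define corner where "corner = q + (Complex s s, Complex s s)"
  have corner_coord: "coord (corner - q) j = s" if "j < 4" for j
    using that by (auto simp: corner_def coord_def)
  have corner: "coord_monomial q \<alpha> corner = s ^ total_degree \<alpha>" for \<alpha>
  proof -
    have "coord_monomial q \<alpha> corner = (\<Prod>j<4. s ^ exponent \<alpha> j)"
      unfolding coord_monomial_def by (rule prod.cong) (auto simp: corner_coord)
    then show ?thesis
      by (simp add: total_degree_def power_sum)
  qed
  have "((\<lambda>\<alpha>. c \<alpha> * coord_monomial q \<alpha> corner) has_sum G corner) UNIV"
    by (rule rep) (simp add: corner_coord \<open>0 < s\<close> less_imp_le)
  then have "(\<lambda>\<alpha>. c \<alpha> * coord_monomial q \<alpha> corner) summable_on UNIV"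
    by (rule has_sum_imp_summable)
  then have "(\<lambda>\<alpha>. norm (c \<alpha> * coord_monomial q \<alpha> corner)) summable_on UNIV"
    by (rule summable_on_iff_abs_summable_on_real[THEN iffD1])
  then show "(\<lambda>\<alpha>. norm (complex_of_real (c \<alpha>)) * s ^ total_degree \<alpha>) summable_on UNIV"
    using \<open>0 < s\<close> by (simp add: corner abs_mult)
next
  fix x assume "x \<in> cube q s"
  then have "((\<lambda>\<alpha>. c \<alpha> * coord_monomial q \<alpha> x) has_sum G x) UNIV"
    by (intro rep) (auto simp: cube_def less_imp_le)
  from has_sum_of_real[OF this]
  show "((\<lambda>\<alpha>. complex_of_real (c \<alpha>) * complex_of_real (coord_monomial q \<alpha> x)) has_sum
      complex_of_real (G x)) UNIV"
    by simp
qed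

lemma real_analytic_on_imp_locally_power_series:
  assumes "real_analytic_on U F"
  shows "locally_power_series U (cF F)"
  unfolding locally_power_series_def
proof
  fix q assume "q \<in> U"
  obtain r c where "r > 0" and rep: "\<forall>x\<in>ball q r.
          ((\<lambda>(a, b, d, e). c (a, b, d, e)
              * (Re (fst x) - Re (fst q)) ^ a * (Im (fst x) - Im (fst q)) ^ b
              * (Re (snd x) - Re (snd q)) ^ d * (Im (snd x) - Im (snd q)) ^ e)
           has_sum F x) UNIV"
    using assms[unfolded real_analytic_on_def, rule_format, OF \<open>q \<in> U\<close>] by (elim exE conjE)
  define s where "s = r / 5"
  have s: "0 < s" "4 * s < r"
    using \<open>r > 0\<close> by (auto simp: s_def)
  have "has_power_series q s (\<lambda>\<alpha>. complex_of_real (c \<alpha>)) (cF F)"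
  proof (rule has_power_series_of_closed_cube[OF s(1)])
    fix x assume "\<And>j. j < 4 \<Longrightarrow> \<bar>coord (x - q) j\<bar> \<le> s"
    then have "x \<in> ball q r"
      using dist_le_of_coord_le s by fastforce
    with rep show "((\<lambda>\<alpha>. c \<alpha> * coord_monomial q \<alpha> x) has_sum F x) UNIV"
      unfolding real_analytic_series_eq by blast
  qed
  moreover have "q \<in> cube q s"
    using s(1) by (simp add: cube_def coord_def)
  ultimately show "\<exists>p s c. has_power_series p s c (cF F) \<and> q \<in> cube p s"
    by blast
qed

section \<open>Regular functions and derivations\<close>

(* The rule cong lets identities that hold only on U, typically because a denominator vanishes
   elsewhere, be differentiated. *)
inductive regular :: "pt set \<Rightarrow> (pt \<Rightarrow> complex) \<Rightarrow> bool" for U where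
  power_series: "locally_power_series U g \<Longrightarrow> regular U g"
| const: "regular U (\<lambda>_. c)"
| add: "regular U f \<Longrightarrow> regular U g \<Longrightarrow> regular U (\<lambda>q. f q + g q)"
| mult: "regular U f \<Longrightarrow> regular U g \<Longrightarrow> regular U (\<lambda>q. f q * g q)"
| inverse: "regular U f \<Longrightarrow> \<forall>q\<in>U. f q \<noteq> 0 \<Longrightarrow> regular U (\<lambda>q. inverse (f q))"
| cnj: "regular U f \<Longrightarrow> regular U (\<lambda>q. cnj (f q))"
| cong: "regular U f \<Longrightarrow> \<forall>q\<in>U. g q = f q \<Longrightarrow> regular U g"

lemma regular_uminus: "regular U f \<Longrightarrow> regular U (\<lambda>q. - f q)"
  using regular.mult[OF regular.const[of U "-1"]] by simp

lemma regular_diff: "regular U f \<Longrightarrow> regular U g \<Longrightarrow> regular U (\<lambda>q. f q - g q)"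
  using regular.add[OF _ regular_uminus] by simp

lemma regular_divide: "regular U f \<Longrightarrow> regular U g \<Longrightarrow> \<forall>q\<in>U. g q \<noteq> 0 \<Longrightarrow> regular U (\<lambda>q. f q / g q)"
  using regular.mult[OF _ regular.inverse] by (simp add: divide_inverse)

lemma regular_line_differentiable_pdir:
  assumes "open U" "regular U g"
  shows "(\<forall>p\<in>U. \<forall>i<4. line_differentiable g p (coord_dir i)) \<and> (\<forall>i<4. regular U (pdir (coord_dir i) g))"
  using assms(2)
proof (induction rule: regular.induct)
  case (power_series g)
  then show ?case
    by (auto intro: regular.power_series locally_power_series_line_differentiable
        locally_power_series_pdir)
next
  case (const c)
  have "regular U (pdir (coord_dir i) (\<lambda>_. c))" for i
    by (rule regular.cong[OF regular.const[of U 0]]) (simp add: pdir_const)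
  then show ?case
    by (simp add: line_differentiable_const)
next
  case (add f g)
  have "regular U (pdir (coord_dir i) (\<lambda>q. f q + g q))" if "i < 4" for i
    by (rule regular.cong[OF regular.add[of U "pdir (coord_dir i) f" "pdir (coord_dir i) g"]])
       (use add that in \<open>auto simp: pdir_add\<close>)
  then show ?case
    using add by (auto simp: line_differentiable_add)
next
  case (mult f g)
  have "regular U (pdir (coord_dir i) (\<lambda>q. f q * g q))" if "i < 4" for i
    by (rule regular.cong[OF regular.add[OF regular.mult[of U "pdir (coord_dir i) f" g]
          regular.mult[of U f "pdir (coord_dir i) g"]]])
       (use mult that in \<open>auto simp: pdir_mult\<close>)
  then show ?case
    using mult by (auto simp: line_differentiable_mult)
next
  case (inverse f)
  have "regular U (pdir (coord_dir i) (\<lambda>q. inverse (f q)))" if "i < 4" for i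
  proof -
    have "regular U (\<lambda>q. (-1) * (pdir (coord_dir i) f q * (inverse (f q) * inverse (f q))))"
      using inverse that by (intro regular.mult regular.const regular.inverse) auto
    then show ?thesis
      by (rule regular.cong) (use inverse that in \<open>auto simp: pdir_inverse power2_eq_square\<close>)
  qed
  then show ?case
    using inverse by (auto simp: line_differentiable_inverse)
next
  case (cnj f)
  have "regular U (pdir (coord_dir i) (\<lambda>q. cnj (f q)))" if "i < 4" for i
    by (rule regular.cong[OF regular.cnj[of U "pdir (coord_dir i) f"]])
       (use cnj that in \<open>auto simp: pdir_cnj\<close>)
  then show ?case
    using cnj by (auto simp: line_differentiable_cnj)
next
  case (cong f g)
  have "regular U (pdir (coord_dir i) g)" if "i < 4" for i
    by (rule regular.cong[of U "pdir (coord_dir i) f"]) (use cong that assms(1) pdir_cong_open in auto)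
  moreover have "line_differentiable g p (coord_dir i)" if "p \<in> U" "i < 4" for p i
    by (rule line_differentiable_cong_open[OF assms(1) that(1), where f = f]) (use cong that in auto)
  ultimately show ?case
    by auto
qed

lemma regular_line_differentiable:
  "open U \<Longrightarrow> regular U g \<Longrightarrow> p \<in> U \<Longrightarrow> i < 4 \<Longrightarrow> line_differentiable g p (coord_dir i)"
  using regular_line_differentiable_pdir by blast

lemma regular_pdir: "open U \<Longrightarrow> regular U g \<Longrightarrow> i < 4 \<Longrightarrow> regular U (pdir (coord_dir i) g)"
  using regular_line_differentiable_pdir by blast

locale regular_derivation =
  fixes U :: "pt set" and D :: "(pt \<Rightarrow> complex) \<Rightarrow> pt \<Rightarrow> complex"
  assumes regular_image: "regular U f \<Longrightarrow> regular U (D f)"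
    and cong: "p \<in> U \<Longrightarrow> \<forall>q\<in>U. f q = g q \<Longrightarrow> D f p = D g p"
    and const: "D (\<lambda>_. c) p = 0"
    and add: "regular U f \<Longrightarrow> regular U g \<Longrightarrow> p \<in> U \<Longrightarrow> D (\<lambda>q. f q + g q) p = D f p + D g p"
    and mult: "regular U f \<Longrightarrow> regular U g \<Longrightarrow> p \<in> U \<Longrightarrow>
      D (\<lambda>q. f q * g q) p = D f p * g p + f p * D g p"
begin

lemma cmult: "regular U f \<Longrightarrow> p \<in> U \<Longrightarrow> D (\<lambda>q. c * f q) p = c * D f p"
  using mult[OF regular.const] const by simp

lemma uminus: "regular U f \<Longrightarrow> p \<in> U \<Longrightarrow> D (\<lambda>q. - f q) p = - D f p"
  using cmult[of f p "-1"] by simp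

lemma diff: "regular U f \<Longrightarrow> regular U g \<Longrightarrow> p \<in> U \<Longrightarrow> D (\<lambda>q. f q - g q) p = D f p - D g p"
  using add[OF _ regular_uminus, of f g p] uminus by simp

lemma inverse:
  assumes "regular U f" "\<forall>q\<in>U. f q \<noteq> 0" "p \<in> U"
  shows "D (\<lambda>q. inverse (f q)) p = - (D f p * inverse (f p) ^ 2)"
proof -
  define X where "X = D (\<lambda>q. inverse (f q)) p"
  have "D (\<lambda>q. f q * inverse (f q)) p = D (\<lambda>_. 1) p"
    using assms by (intro cong) auto
  then have "D f p * inverse (f p) + f p * X = 0"
    using assms by (simp add: X_def mult regular.inverse const)
  then have fX: "f p * X = - (D f p * inverse (f p))"
    by (simp add: add_eq_0_iff)
  have "f p \<noteq> 0"
    using assms(2,3) by blast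
  then have "X = inverse (f p) * (f p * X)"
    by (simp add: mult.assoc[symmetric])
  also have "\<dots> = - (D f p * inverse (f p) ^ 2)"
    unfolding fX by (simp add: power2_eq_square mult_ac)
  finally show ?thesis
    unfolding X_def .
qed

lemma divide:
  assumes "regular U f" "regular U g" "\<forall>q\<in>U. g q \<noteq> 0" "p \<in> U"
  shows "D (\<lambda>q. f q / g q) p = (D f p * g p - f p * D g p) / (g p)\<^sup>2"
proof -
  have "D (\<lambda>q. f q / g q) p = D (\<lambda>q. f q * inverse (g q)) p"
    by (simp only: divide_inverse)
  also have "\<dots> = D f p * inverse (g p) + f p * D (\<lambda>q. inverse (g q)) p"
    using assms by (intro mult regular.inverse)
  also have "\<dots> = D f p * inverse (g p) - f p * (D g p * inverse (g p) ^ 2)"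
    using inverse[OF assms(2-4)] by simp
  also have "\<dots> = (D f p * g p - f p * D g p) / (g p)\<^sup>2"
    using assms(3,4) by (auto simp: field_simps power2_eq_square)
  finally show ?thesis .
qed

end

lemma regular_derivation_lincomb:
  assumes "regular_derivation U D\<^sub>1" "regular_derivation U D\<^sub>2" "regular U a" "regular U b"
  shows "regular_derivation U (\<lambda>f p. a p * D\<^sub>1 f p + b p * D\<^sub>2 f p)"
proof -
  interpret D\<^sub>1: regular_derivation U D\<^sub>1 by fact
  interpret D\<^sub>2: regular_derivation U D\<^sub>2 by fact
  show ?thesis
  proof
    show "regular U (\<lambda>p. a p * D\<^sub>1 f p + b p * D\<^sub>2 f p)" if "regular U f" for f
      using assms(3,4) that by (intro regular.add regular.mult D\<^sub>1.regular_image D\<^sub>2.regular_image)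
    show "a p * D\<^sub>1 f p + b p * D\<^sub>2 f p = a p * D\<^sub>1 g p + b p * D\<^sub>2 g p"
      if "p \<in> U" "\<forall>q\<in>U. f q = g q" for p f g
      using D\<^sub>1.cong[OF that] D\<^sub>2.cong[OF that] by simp
    show "a p * D\<^sub>1 (\<lambda>_. c) p + b p * D\<^sub>2 (\<lambda>_. c) p = 0" for c p
      by (simp add: D\<^sub>1.const D\<^sub>2.const)
    show "a p * D\<^sub>1 (\<lambda>q. f q + g q) p + b p * D\<^sub>2 (\<lambda>q. f q + g q) p
        = (a p * D\<^sub>1 f p + b p * D\<^sub>2 f p) + (a p * D\<^sub>1 g p + b p * D\<^sub>2 g p)"
      if "regular U f" "regular U g" "p \<in> U" for f g p
      using that by (simp add: D\<^sub>1.add D\<^sub>2.add algebra_simps)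
    show "a p * D\<^sub>1 (\<lambda>q. f q * g q) p + b p * D\<^sub>2 (\<lambda>q. f q * g q) p
        = (a p * D\<^sub>1 f p + b p * D\<^sub>2 f p) * g p + f p * (a p * D\<^sub>1 g p + b p * D\<^sub>2 g p)"
      if "regular U f" "regular U g" "p \<in> U" for f g p
      using that by (simp add: D\<^sub>1.mult D\<^sub>2.mult algebra_simps)
  qed
qed

lemma regular_derivation_pdir:
  assumes "open U" "i < 4"
  shows "regular_derivation U (pdir (coord_dir i))"
proof
  show "regular U (pdir (coord_dir i) f)" if "regular U f" for f
    using assms that by (intro regular_pdir)
  show "pdir (coord_dir i) f p = pdir (coord_dir i) g p" if "p \<in> U" "\<forall>q\<in>U. f q = g q" for p f g
    using assms(1) that by (rule pdir_cong_open)
  show "pdir (coord_dir i) (\<lambda>_. c) p = 0" for c p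
    by (rule pdir_const)
  show "pdir (coord_dir i) (\<lambda>q. f q + g q) p = pdir (coord_dir i) f p + pdir (coord_dir i) g p"
    if "regular U f" "regular U g" "p \<in> U" for f g p
    using assms that by (intro pdir_add regular_line_differentiable)
  show "pdir (coord_dir i) (\<lambda>q. f q * g q) p = pdir (coord_dir i) f p * g p + f p * pdir (coord_dir i) g p"
    if "regular U f" "regular U g" "p \<in> U" for f g p
    using assms that by (intro pdir_mult regular_line_differentiable)
qed

lemma second_derivation_add:
  assumes "regular_derivation U D" "regular_derivation U E" "regular U f" "regular U g" "p \<in> U"
  shows "E (D (\<lambda>q. f q + g q)) p = E (D f) p + E (D g) p"
proof -
  interpret D: regular_derivation U D by fact
  interpret E: regular_derivation U E by fact
  have "E (D (\<lambda>q. f q + g q)) p = E (\<lambda>q. D f q + D g q) p"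
    using assms(3-5) by (intro E.cong) (auto simp: D.add)
  also have "\<dots> = E (D f) p + E (D g) p"
    using assms(3-5) by (intro E.add D.regular_image)
  finally show ?thesis .
qed

lemma second_derivation_mult:
  assumes "regular_derivation U D" "regular_derivation U E" "regular U f" "regular U g" "p \<in> U"
  shows "E (D (\<lambda>q. f q * g q)) p = E (D f) p * g p + D f p * E g p + E f p * D g p + f p * E (D g) p"
proof -
  interpret D: regular_derivation U D by fact
  interpret E: regular_derivation U E by fact
  have "E (D (\<lambda>q. f q * g q)) p = E (\<lambda>q. D f q * g q + f q * D g q) p"
    using assms(3-5) by (intro E.cong) (auto simp: D.mult)
  also have "\<dots> = E (D f) p * g p + D f p * E g p + E f p * D g p + f p * E (D g) p"
    using assms(3-5)
    by (simp add: E.add E.mult D.regular_image regular.mult add.assoc)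
  finally show ?thesis .
qed

lemma second_derivation_inverse:
  assumes "regular_derivation U D" "regular_derivation U E" "regular U f" "\<forall>q\<in>U. f q \<noteq> 0" "p \<in> U"
  shows "E (D (\<lambda>q. inverse (f q))) p
    = 2 * D f p * E f p * inverse (f p) ^ 3 - E (D f) p * inverse (f p) ^ 2"
proof -
  interpret D: regular_derivation U D by fact
  interpret E: regular_derivation U E by fact
  have inv: "regular U (\<lambda>q. inverse (f q))"
    using assms(3,4) by (rule regular.inverse)
  have "E (D (\<lambda>q. inverse (f q))) p = E (\<lambda>q. - (D f q * (inverse (f q) * inverse (f q)))) p"
    using assms(3-5) by (intro E.cong) (auto simp: D.inverse power2_eq_square)
  also have "\<dots> = - (E (D f) p * (inverse (f p) * inverse (f p))
      + D f p * (E (\<lambda>q. inverse (f q)) p * inverse (f p) + inverse (f p) * E (\<lambda>q. inverse (f q)) p))"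
    using assms(3-5) inv
    by (simp add: E.uminus E.mult D.regular_image regular.mult)
  also have "\<dots> = 2 * D f p * E f p * inverse (f p) ^ 3 - E (D f) p * inverse (f p) ^ 2"
    using assms(3-5) by (simp add: E.inverse algebra_simps power2_eq_square power3_eq_cube)
  finally show ?thesis .
qed

lemma regular_pdir_commute:
  assumes U: "open U" and g: "regular U g"
  shows "\<forall>p\<in>U. \<forall>i<4. \<forall>j<4.
    pdir (coord_dir i) (pdir (coord_dir j) g) p = pdir (coord_dir j) (pdir (coord_dir i) g) p"
  using g
proof (induction rule: regular.induct)
  case (power_series g)
  then show ?case
    using locally_power_series_pdir_commute by blast
next
  case (const c)
  then show ?case
    by (simp add: pdir_const)
next
  case (add f g)
  then show ?case
    using second_derivation_add[OF regular_derivation_pdir regular_derivation_pdir, OF U _ U] by simp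
next
  case (mult f g)
  then show ?case
    using second_derivation_mult[OF regular_derivation_pdir regular_derivation_pdir, OF U _ U]
    by (simp add: algebra_simps)
next
  case (inverse f)
  then show ?case
    by (simp add: second_derivation_inverse[OF regular_derivation_pdir regular_derivation_pdir, OF U _ U]
        ac_simps)
next
  case (cnj f)
  have "pdir (coord_dir i) (pdir (coord_dir j) (\<lambda>q. cnj (f q))) p = cnj (pdir (coord_dir i) (pdir (coord_dir j) f) p)"
    if "p \<in> U" "i < 4" "j < 4" for p i j
  proof -
    have "pdir (coord_dir i) (pdir (coord_dir j) (\<lambda>q. cnj (f q))) p
        = pdir (coord_dir i) (\<lambda>q. cnj (pdir (coord_dir j) f q)) p"
      by (rule pdir_cong_open[OF U that(1)]) (use cnj.hyps that U in \<open>auto simp: pdir_cnj regular_line_differentiable\<close>)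
    also have "\<dots> = cnj (pdir (coord_dir i) (pdir (coord_dir j) f) p)"
      by (rule pdir_cnj) (use cnj.hyps that U in \<open>auto intro: regular_line_differentiable regular_pdir\<close>)
    finally show ?thesis .
  qed
  then show ?case
    using cnj.IH by auto
next
  case (cong f g)
  have "pdir (coord_dir i) (pdir (coord_dir j) g) p = pdir (coord_dir i) (pdir (coord_dir j) f) p"
    if "p \<in> U" "i < 4" "j < 4" for p i j
    by (rule pdir_cong_open[OF U that(1)]) (use cong.hyps U in \<open>auto intro: pdir_cong_open\<close>)
  then show ?case
    using cong.IH by auto
qed

section \<open>Wirtinger derivatives\<close>

definition wirtinger :: "complex \<Rightarrow> nat \<Rightarrow> nat \<Rightarrow> (pt \<Rightarrow> complex) \<Rightarrow> pt \<Rightarrow> complex" where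
  "wirtinger \<sigma> a b g p = (pdir (coord_dir a) g p + \<sigma> * pdir (coord_dir b) g p) / 2"

lemma wirtinger_eq_lincomb:
  "wirtinger \<sigma> a b = (\<lambda>g p. 1 / 2 * pdir (coord_dir a) g p + \<sigma> / 2 * pdir (coord_dir b) g p)"
  by (intro ext) (simp add: wirtinger_def field_simps)

lemma regular_derivation_wirtinger:
  "open U \<Longrightarrow> a < 4 \<Longrightarrow> b < 4 \<Longrightarrow> regular_derivation U (wirtinger \<sigma> a b)"
  unfolding wirtinger_eq_lincomb
  by (intro regular_derivation_lincomb regular_derivation_pdir regular.const)

lemma wirtinger_commute:
  assumes U: "open U" and f: "regular U f" and p: "p \<in> U" and "a < 4" "b < 4" "c < 4" "d < 4"
  shows "wirtinger \<sigma> a b (wirtinger \<tau> c d f) p = wirtinger \<tau> c d (wirtinger \<sigma> a b f) p"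
proof -
  have expand: "pdir (coord_dir i) (wirtinger \<rho> k l f) p
      = 1 / 2 * pdir (coord_dir i) (pdir (coord_dir k) f) p + \<rho> / 2 * pdir (coord_dir i) (pdir (coord_dir l) f) p"
    if "i < 4" "k < 4" "l < 4" for i k l \<rho>
  proof -
    interpret Di: regular_derivation U "pdir (coord_dir i)"
      using U \<open>i < 4\<close> by (rule regular_derivation_pdir)
    have r: "regular U (pdir (coord_dir k) f)" "regular U (pdir (coord_dir l) f)"
      using U f that by (simp_all add: regular_pdir)
    have "pdir (coord_dir i) (\<lambda>q. 1 / 2 * pdir (coord_dir k) f q + \<rho> / 2 * pdir (coord_dir l) f q) p
        = pdir (coord_dir i) (\<lambda>q. 1 / 2 * pdir (coord_dir k) f q) p
          + pdir (coord_dir i) (\<lambda>q. \<rho> / 2 * pdir (coord_dir l) f q) p"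
      using regular.mult[OF regular.const r(1)] regular.mult[OF regular.const r(2)] p by (rule Di.add)
    also have "\<dots> = 1 / 2 * pdir (coord_dir i) (pdir (coord_dir k) f) p
        + \<rho> / 2 * pdir (coord_dir i) (pdir (coord_dir l) f) p"
      using U f p that by (simp only: Di.cmult regular_pdir)
    finally show ?thesis
      by (simp only: wirtinger_eq_lincomb)
  qed
  show ?thesis
    unfolding wirtinger_def[of \<sigma> a b "wirtinger \<tau> c d f"] wirtinger_def[of \<tau> c d "wirtinger \<sigma> a b f"]
    using assms by (simp add: expand regular_pdir_commute[OF U f, rule_format, OF p] algebra_simps)
qed

lemma wirtinger_cnj:
  "open U \<Longrightarrow> regular U f \<Longrightarrow> p \<in> U \<Longrightarrow> a < 4 \<Longrightarrow> b < 4 \<Longrightarrow>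
    wirtinger \<sigma> a b (\<lambda>q. cnj (f q)) p = cnj (wirtinger (cnj \<sigma>) a b f p)"
  unfolding wirtinger_def by (simp add: pdir_cnj regular_line_differentiable)

lemma Dz1_eq_wirtinger: "Dz1 = wirtinger (- \<i>) 0 1"
  and Dzb1_eq_wirtinger: "Dzb1 = wirtinger \<i> 0 1"
  and Dz2_eq_wirtinger: "Dz2 = wirtinger (- \<i>) 2 3"
  by (intro ext; simp add: Dz1_def Dzb1_def Dz2_def wirtinger_def coord_dir_def)+

lemma regular_derivation_Dz1: "open U \<Longrightarrow> regular_derivation U Dz1"
  and regular_derivation_Dzb1: "open U \<Longrightarrow> regular_derivation U Dzb1"
  and regular_derivation_Dz2: "open U \<Longrightarrow> regular_derivation U Dz2"
  unfolding Dz1_eq_wirtinger Dzb1_eq_wirtinger Dz2_eq_wirtinger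
  by (simp_all add: regular_derivation_wirtinger)

lemma Dz1_Dzb1_commute: "open U \<Longrightarrow> regular U f \<Longrightarrow> p \<in> U \<Longrightarrow> Dz1 (Dzb1 f) p = Dzb1 (Dz1 f) p"
  and Dz1_Dz2_commute: "open U \<Longrightarrow> regular U f \<Longrightarrow> p \<in> U \<Longrightarrow> Dz1 (Dz2 f) p = Dz2 (Dz1 f) p"
  and Dzb1_Dz2_commute: "open U \<Longrightarrow> regular U f \<Longrightarrow> p \<in> U \<Longrightarrow> Dzb1 (Dz2 f) p = Dz2 (Dzb1 f) p"
  unfolding Dz1_eq_wirtinger Dzb1_eq_wirtinger Dz2_eq_wirtinger
  by (simp_all add: wirtinger_commute)

lemma Dz1_cnj: "open U \<Longrightarrow> regular U f \<Longrightarrow> p \<in> U \<Longrightarrow> Dz1 (\<lambda>q. cnj (f q)) p = cnj (Dzb1 f p)"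
  and Dzb1_cnj: "open U \<Longrightarrow> regular U f \<Longrightarrow> p \<in> U \<Longrightarrow> Dzb1 (\<lambda>q. cnj (f q)) p = cnj (Dz1 f p)"
  unfolding Dz1_eq_wirtinger Dzb1_eq_wirtinger
  by (simp_all add: wirtinger_cnj)

section \<open>The rigid hypersurface\<close>

locale rigid_hypersurface =
  fixes U :: "pt set" and F :: "pt \<Rightarrow> real"
  assumes open_U: "open U"
    and analytic: "real_analytic_on U F"
    and levi_nonzero: "\<forall>p\<in>U. Dz1 (Dzb1 (cF F)) p \<noteq> 0"
begin

abbreviation levi :: "pt \<Rightarrow> complex" where "levi \<equiv> Dz1 (Dzb1 (cF F))"
abbreviation k :: "pt \<Rightarrow> complex" where "k \<equiv> slant F"
abbreviation kb :: "pt \<Rightarrow> complex" where "kb \<equiv> Dzb1 k"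
abbreviation P :: "pt \<Rightarrow> complex" where "P \<equiv> Pfun F"
abbreviation Pb :: "pt \<Rightarrow> complex" where "Pb \<equiv> \<lambda>q. cnj (P q)"
abbreviation K :: "(pt \<Rightarrow> complex) \<Rightarrow> pt \<Rightarrow> complex" where "K \<equiv> Kop F"

sublocale Dz1: regular_derivation U Dz1
  using open_U by (rule regular_derivation_Dz1)

sublocale Dzb1: regular_derivation U Dzb1
  using open_U by (rule regular_derivation_Dzb1)

sublocale Dz2: regular_derivation U Dz2
  using open_U by (rule regular_derivation_Dz2)

lemma regular_cF: "regular U (cF F)"
  using analytic by (intro regular.power_series real_analytic_on_imp_locally_power_series)

lemma regular_levi: "regular U levi"
  by (rule Dz1.regular_image[OF Dzb1.regular_image[OF regular_cF]])

lemma slant_eq: "k = (\<lambda>q. - Dz2 (Dzb1 (cF F)) q / levi q)"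
  by (intro ext) (simp add: slant_def)

lemma regular_slant: "regular U k"
  unfolding slant_eq
  by (rule regular_divide[OF regular_uminus[OF Dz2.regular_image[OF Dzb1.regular_image[OF regular_cF]]]
        regular_levi levi_nonzero])

lemma regular_kb: "regular U kb"
  by (rule Dzb1.regular_image[OF regular_slant])

lemma Pfun_eq: "P = (\<lambda>q. Dz1 levi q / levi q)"
  by (intro ext) (simp add: Pfun_def)

lemma regular_Pfun: "regular U P"
  unfolding Pfun_eq by (rule regular_divide[OF Dz1.regular_image[OF regular_levi] regular_levi levi_nonzero])

lemma regular_cnj_Pfun: "regular U Pb"
  by (rule regular.cnj[OF regular_Pfun])

lemma Kop_eq_lincomb: "K = (\<lambda>g p. k p * Dz1 g p + 1 * Dz2 g p)"
  by (intro ext) (simp add: Kop_def)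

lemma regular_derivation_Kop: "regular_derivation U K"
  unfolding Kop_eq_lincomb
  by (rule regular_derivation_lincomb[OF regular_derivation_Dz1[OF open_U] regular_derivation_Dz2[OF open_U]
        regular_slant regular.const])

sublocale K: regular_derivation U K
  by (rule regular_derivation_Kop)

lemma cnj_levi: "p \<in> U \<Longrightarrow> cnj (levi p) = levi p"
proof -
  assume p: "p \<in> U"
  have "cnj (levi p) = Dzb1 (\<lambda>q. cnj (Dzb1 (cF F) q)) p"
    by (rule Dzb1_cnj[OF open_U Dzb1.regular_image[OF regular_cF] p, symmetric])
  also have "\<dots> = Dzb1 (Dz1 (cF F)) p"
    using p by (intro Dzb1.cong) (use Dz1_cnj[OF open_U regular_cF] in auto)
  also have "\<dots> = levi p"
    by (rule Dz1_Dzb1_commute[OF open_U regular_cF p, symmetric])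
  finally show ?thesis .
qed

lemma cnj_Pfun: "p \<in> U \<Longrightarrow> Pb p = Dzb1 levi p / levi p"
proof -
  assume p: "p \<in> U"
  have "cnj (Dz1 levi p) = Dzb1 (\<lambda>q. cnj (levi q)) p"
    by (rule Dzb1_cnj[OF open_U regular_levi p, symmetric])
  also have "\<dots> = Dzb1 levi p"
    using p by (intro Dzb1.cong) (auto simp: cnj_levi)
  finally show ?thesis
    using p by (simp add: Pfun_eq cnj_levi)
qed

(* Differentiate k F_{z1 zb1} = - F_{z2 zb1} in z1. *)
lemma Kop_levi: "p \<in> U \<Longrightarrow> K levi p = - (levi p * Dz1 k p)"
proof -
  assume p: "p \<in> U"
  have "Dz1 k p * levi p + k p * Dz1 levi p = Dz1 (\<lambda>q. k q * levi q) p"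
    by (rule Dz1.mult[OF regular_slant regular_levi p, symmetric])
  also have "\<dots> = Dz1 (\<lambda>q. - Dz2 (Dzb1 (cF F)) q) p"
    using p levi_nonzero by (intro Dz1.cong) (auto simp: slant_eq)
  also have "\<dots> = - Dz2 levi p"
    using Dz1.uminus[OF Dz2.regular_image[OF Dzb1.regular_image[OF regular_cF]] p]
      Dz1_Dz2_commute[OF open_U Dzb1.regular_image[OF regular_cF] p]
    by simp
  finally show ?thesis
    by (simp add: Kop_def algebra_simps eq_neg_iff_add_eq_0)
qed

lemma Dzb1_Kop: "regular U g \<Longrightarrow> p \<in> U \<Longrightarrow> Dzb1 (K g) p = K (Dzb1 g) p + kb p * Dz1 g p"
  unfolding Kop_def
  by (simp add: Dzb1.add Dzb1.mult regular_slant Dz1.regular_image Dz2.regular_image regular.mult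
      Dz1_Dzb1_commute[OF open_U] Dzb1_Dz2_commute[OF open_U])

lemma Dzb1_Pfun: "p \<in> U \<Longrightarrow> Dzb1 P p = Dz1 Pb p"
proof -
  assume p: "p \<in> U"
  have "Dz1 Pb p = Dz1 (\<lambda>q. Dzb1 levi q / levi q) p"
    by (rule Dz1.cong[OF p]) (simp add: cnj_Pfun)
  also have "\<dots> = (Dz1 (Dzb1 levi) p * levi p - Dzb1 levi p * Dz1 levi p) / (levi p)\<^sup>2"
    by (rule Dz1.divide[OF Dzb1.regular_image[OF regular_levi] regular_levi levi_nonzero p])
  also have "\<dots> = Dzb1 P p"
    unfolding Pfun_eq Dzb1.divide[OF Dz1.regular_image[OF regular_levi] regular_levi levi_nonzero p]
      Dz1_Dzb1_commute[OF open_U regular_levi p]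
    by (simp add: mult.commute)
  finally show ?thesis ..
qed

lemma cnj_Dzb1_Pfun: "p \<in> U \<Longrightarrow> cnj (Dzb1 P p) = Dzb1 P p"
  using Dzb1_Pfun Dz1_cnj[OF open_U regular_Pfun] by simp

lemma Kop_cnj_Pfun: "p \<in> U \<Longrightarrow> K Pb p = - (Dz1 kb p + kb p * P p)"
proof -
  assume p: "p \<in> U"
  have "K Pb p = K (\<lambda>q. Dzb1 levi q / levi q) p"
    by (rule K.cong[OF p]) (simp add: cnj_Pfun)
  also have "\<dots> = (K (Dzb1 levi) p * levi p - Dzb1 levi p * K levi p) / (levi p)\<^sup>2"
    by (rule K.divide[OF Dzb1.regular_image[OF regular_levi] regular_levi levi_nonzero p])
  also have "K (Dzb1 levi) p = Dzb1 (K levi) p - kb p * Dz1 levi p"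
    using Dzb1_Kop[OF regular_levi p] by simp
  also have "Dzb1 (K levi) p = Dzb1 (\<lambda>q. - (levi q * Dz1 k q)) p"
    by (rule Dzb1.cong[OF p]) (simp add: Kop_levi)
  also have "\<dots> = - (Dzb1 levi p * Dz1 k p + levi p * Dz1 kb p)"
    using p Dz1_Dzb1_commute[OF open_U regular_slant p]
    by (simp add: Dzb1.uminus Dzb1.mult regular.mult regular_levi Dz1.regular_image regular_slant)
  also have "((- (Dzb1 levi p * Dz1 k p + levi p * Dz1 kb p) - kb p * Dz1 levi p) * levi p
      - Dzb1 levi p * K levi p) / (levi p)\<^sup>2 = - (Dz1 kb p + kb p * P p)"
  proof -
    have "levi p \<noteq> 0"
      using p levi_nonzero by blast
    moreover from this have "Dz1 levi p = P p * levi p"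
      by (simp add: Pfun_def)
    ultimately show ?thesis
      by (simp add: Kop_levi[OF p] field_simps power2_eq_square)
  qed
  finally show ?thesis .
qed

lemma Kop_Dzb1_cnj_Pfun:
  "p \<in> U \<Longrightarrow> K (Dzb1 Pb) p = - (Dz1 (Dzb1 kb) p + Dzb1 kb p * P p + 2 * kb p * Dzb1 P p)"
proof -
  assume p: "p \<in> U"
  have "K (Dzb1 Pb) p = Dzb1 (K Pb) p - kb p * Dz1 Pb p"
    using Dzb1_Kop[OF regular_cnj_Pfun p] by simp
  also have "Dzb1 (K Pb) p = Dzb1 (\<lambda>q. - (Dz1 kb q + kb q * P q)) p"
    by (rule Dzb1.cong[OF p]) (simp add: Kop_cnj_Pfun)
  also have "\<dots> = - (Dz1 (Dzb1 kb) p + (Dzb1 kb p * P p + kb p * Dzb1 P p))"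
    using p regular_kb regular_Pfun Dz1.regular_image[OF regular_kb]
    by (simp only: Dzb1.uminus Dzb1.add Dzb1.mult regular.add regular.mult
        Dz1_Dzb1_commute[OF open_U regular_kb p, symmetric])
  finally show ?thesis
    using p by (simp add: Dzb1_Pfun algebra_simps)
qed

end

locale rigid_hypersurface_nonzero_slant_deriv = rigid_hypersurface +
  assumes kb_nonzero: "\<forall>p\<in>U. Dzb1 (slant F) p \<noteq> 0"
begin

abbreviation A :: "pt \<Rightarrow> complex" where "A \<equiv> \<lambda>q. Dzb1 kb q / kb q"

lemma regular_A: "regular U A"
  by (rule regular_divide[OF Dzb1.regular_image[OF regular_kb] regular_kb kb_nonzero])

lemma Bfun_eq: "Bfun F = (\<lambda>q. 1 / 3 * (A q - Pb q))"
  by (simp add: fun_eq_iff Bfun_def Let_def)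

lemma regular_Bfun: "regular U (Bfun F)"
  unfolding Bfun_eq by (rule regular.mult[OF regular.const regular_diff[OF regular_A regular_cnj_Pfun]])

lemma regular_derivation_Bfun:
  assumes "regular_derivation U D" "p \<in> U"
  shows "D (Bfun F) p = 1 / 3 * (D A p - D Pb p)"
proof -
  interpret D: regular_derivation U D by fact
  show ?thesis
    unfolding Bfun_eq
    by (simp only: D.cmult[OF regular_diff[OF regular_A regular_cnj_Pfun] assms(2)]
        D.diff[OF regular_A regular_cnj_Pfun assms(2)])
qed

lemma Dz1_A: "p \<in> U \<Longrightarrow> Dz1 A p = (Dz1 (Dzb1 kb) p * kb p - Dzb1 kb p * Dz1 kb p) / (kb p)\<^sup>2"
  by (rule Dz1.divide[OF Dzb1.regular_image[OF regular_kb] regular_kb kb_nonzero])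

lemma I0_eq: "p \<in> U \<Longrightarrow> I0 F p = - 1 / 3 * K A p / kb p + 2 / 3 * cnj (A p) + 2 / 3 * Dz1 kb p / kb p"
proof -
  assume p: "p \<in> U"
  have Dz1_kbar: "Dz1 (\<lambda>q. cnj (k q)) q = cnj (kb q)" if "q \<in> U" for q
    by (rule Dz1_cnj[OF open_U regular_slant that])
  have "Dz1 (Dz1 (\<lambda>q. cnj (k q))) p = Dz1 (\<lambda>q. cnj (kb q)) p"
    by (rule Dz1.cong[OF p]) (simp add: Dz1_kbar)
  also have "\<dots> = cnj (Dzb1 kb p)"
    by (rule Dz1_cnj[OF open_U regular_kb p])
  finally have Dz1_Dz1_kbar: "Dz1 (Dz1 (\<lambda>q. cnj (k q))) p = cnj (Dzb1 kb p)" .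
  have KA: "K A p = (K (Dzb1 kb) p * kb p - Dzb1 kb p * K kb p) / (kb p)\<^sup>2"
    by (rule K.divide[OF Dzb1.regular_image[OF regular_kb] regular_kb kb_nonzero p])
  have "kb p \<noteq> 0"
    using p kb_nonzero by blast
  then show ?thesis
    unfolding I0_def Let_def KA Dz1_kbar[OF p] Dz1_Dz1_kbar
    by (simp add: field_simps power2_eq_square power3_eq_cube)
qed

lemma V0_eq: "p \<in> U \<Longrightarrow> V0 F p = - Dzb1 (Bfun F) p + 1 / 3 * ((2 * A p + Pb p) * Bfun F p)"
proof -
  assume p: "p \<in> U"
  have EB: "Dzb1 (Bfun F) p = 1 / 3 * (Dzb1 A p - Dzb1 Pb p)"
    by (rule regular_derivation_Bfun[OF regular_derivation_Dzb1[OF open_U] p])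
  have EA: "Dzb1 A p = (Dzb1 (Dzb1 kb) p * kb p - Dzb1 kb p * Dzb1 kb p) / (kb p)\<^sup>2"
    by (rule Dzb1.divide[OF Dzb1.regular_image[OF regular_kb] regular_kb kb_nonzero p])
  have "kb p \<noteq> 0"
    using p kb_nonzero by blast
  then show ?thesis
    unfolding EB EA V0_def Let_def by (simp add: Bfun_eq field_simps power2_eq_square)
qed

lemma Dzb1_I0:
  "p \<in> U \<Longrightarrow> Dzb1 (I0 F) p = - 1 / 3 * ((K (Dzb1 A) p + kb p * Dz1 A p) * kb p - K A p * Dzb1 kb p) / (kb p)\<^sup>2
     + 2 / 3 * cnj (Dz1 A p) + 2 / 3 * Dz1 A p"
proof -
  assume p: "p \<in> U"
  define R where "R q = K A q / kb q" for q
  define S where "S q = Dz1 kb q / kb q" for q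
  have R: "regular U R" and S: "regular U S"
    unfolding R_def S_def
    by (rule regular_divide[OF K.regular_image[OF regular_A] regular_kb kb_nonzero],
        rule regular_divide[OF Dz1.regular_image[OF regular_kb] regular_kb kb_nonzero])
  have "Dzb1 (I0 F) p = Dzb1 (\<lambda>q. (- 1 / 3 * R q + 2 / 3 * cnj (A q)) + 2 / 3 * S q) p"
    by (rule Dzb1.cong[OF p]) (simp add: I0_eq R_def S_def)
  also have "\<dots> = (- 1 / 3 * Dzb1 R p + 2 / 3 * Dzb1 (\<lambda>q. cnj (A q)) p) + 2 / 3 * Dzb1 S p"
    using R S regular.cnj[OF regular_A] p
    by (simp only: Dzb1.add Dzb1.cmult regular.add regular.mult regular.const)
  also have "Dzb1 R p = (Dzb1 (K A) p * kb p - K A p * Dzb1 kb p) / (kb p)\<^sup>2"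
    unfolding R_def by (rule Dzb1.divide[OF K.regular_image[OF regular_A] regular_kb kb_nonzero p])
  also have "Dzb1 S p = Dz1 A p"
    unfolding S_def Dzb1.divide[OF Dz1.regular_image[OF regular_kb] regular_kb kb_nonzero p]
      Dz1.divide[OF Dzb1.regular_image[OF regular_kb] regular_kb kb_nonzero p]
      Dz1_Dzb1_commute[OF open_U regular_kb p]
    by (simp add: mult.commute)
  also have "Dzb1 (\<lambda>q. cnj (A q)) p = cnj (Dz1 A p)"
    by (rule Dzb1_cnj[OF open_U regular_A p])
  also have "Dzb1 (K A) p = K (Dzb1 A) p + kb p * Dz1 A p"
    by (rule Dzb1_Kop[OF regular_A p])
  finally show ?thesis
    by simp
qed

lemma Kop_V0:
  "p \<in> U \<Longrightarrow> K (V0 F) p = - (K (Dzb1 A) p - K (Dzb1 Pb) p) / 3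
     + ((2 * K A p + K Pb p) * Bfun F p + (2 * A p + Pb p) * ((K A p - K Pb p) / 3)) / 3"
proof -
  assume p: "p \<in> U"
  define B where "B = Bfun F"
  have reg: "regular U A" "regular U Pb" "regular U B" "regular U (Dzb1 B)"
    using regular_A regular_cnj_Pfun regular_Bfun by (simp_all add: B_def Dzb1.regular_image)
  have "K (V0 F) p = K (\<lambda>q. - Dzb1 B q + 1 / 3 * ((2 * A q + Pb q) * B q)) p"
    by (rule K.cong[OF p]) (simp add: V0_eq B_def)
  also have "\<dots> = - K (Dzb1 B) p + 1 / 3 * ((2 * K A p + K Pb p) * B p + (2 * A p + Pb p) * K B p)"
    using reg p
    by (simp only: K.add K.uminus K.mult K.const regular.add regular.mult regular.const regular_uminus
        mult_zero_left add_0_left)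
  also have "K (Dzb1 B) p = K (\<lambda>q. 1 / 3 * (Dzb1 A q - Dzb1 Pb q)) p"
    by (rule K.cong[OF p]) (simp add: B_def regular_derivation_Bfun[OF regular_derivation_Dzb1[OF open_U]])
  also have "\<dots> = 1 / 3 * (K (Dzb1 A) p - K (Dzb1 Pb) p)"
    by (simp only: K.cmult[OF regular_diff[OF Dzb1.regular_image[OF reg(1)] Dzb1.regular_image[OF reg(2)]] p]
        K.diff[OF Dzb1.regular_image[OF reg(1)] Dzb1.regular_image[OF reg(2)] p])
  also have "K B p = 1 / 3 * (K A p - K Pb p)"
    unfolding B_def by (rule regular_derivation_Bfun[OF regular_derivation_Kop p])
  finally show ?thesis
    by (simp add: B_def field_simps)
qed

end

lemma re_eq_half_add_cnj: "complex_of_real (Re z) = (z + cnj z) / 2"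
  by (simp add: complex_add_cnj)

(* The variables are values at one point: D = conj L1 k, ED = conj L1 D, LD = L1 D, LED = L1 ED,
   EP = conj L1 P, LA = L1 A, KA = K A, KEA = K (conj L1 A), KPb = K (conj P),
   KEPb = K (conj L1 (conj P)), I = I0, B = Bfun, EI = conj L1 I0, KV0 = K V0. *)
lemma Q0_rational_identity:
  fixes D ED LD LED P EP LA KA KEA I B KV0 KPb KEPb EI :: complex
  assumes D: "D \<noteq> 0" and EP: "cnj EP = EP"
    and LA: "LA = (LED * D - ED * LD) / D\<^sup>2"
    and I: "I = - 1 / 3 * KA / D + 2 / 3 * cnj (ED / D) + 2 / 3 * LD / D"
    and B: "B = 1 / 3 * (ED / D - cnj P)"
    and KPb: "KPb = - (LD + D * P)"
    and KEPb: "KEPb = - (LED + ED * P + 2 * D * EP)"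
    and KV0: "KV0 = - (KEA - KEPb) / 3 + ((2 * KA + KPb) * B + (2 * (ED / D) + cnj P) * ((KA - KPb) / 3)) / 3"
    and EI: "EI = - 1 / 3 * ((KEA + D * LA) * D - KA * ED) / D\<^sup>2 + 2 / 3 * cnj LA + 2 / 3 * LA"
  shows "1 / 2 * EI + 1 / 2 * B * I + cnj B * cnj I - 1 / 2 * KV0 / D =
     B * I + cnj B * cnj I - B * cnj B + 2 / 3 * complex_of_real (Re LA) + 1 / 3 * complex_of_real (Re EP)"
proof -
  have EP': "complex_of_real (Re EP) = EP"
    using EP by (simp add: re_eq_half_add_cnj)
  have LED: "LED = (LA * D\<^sup>2 + ED * LD) / D"
    using LA D by (simp add: field_simps power2_eq_square)
  show ?thesis
    unfolding EP' re_eq_half_add_cnj EI KV0 KEPb KPb I B LED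
    using D EP by (simp add: field_simps power2_eq_square)
qed

theorem proposition8p1:
  fixes U :: "(complex \<times> complex) set" and F :: "complex \<times> complex \<Rightarrow> real"
  assumes "open U"
    and "real_analytic_on U F"
    and "\<forall>p\<in>U. Dz1 (Dzb1 (cF F)) p \<noteq> 0"
    and "\<forall>p\<in>U. Dz1 (Dzb1 (cF F)) p * Dz2 (Dzb2 (cF F)) p
                 - Dz2 (Dzb1 (cF F)) p * Dz1 (Dzb2 (cF F)) p = 0"
    and "\<forall>p\<in>U. Dzb1 (slant F) p \<noteq> 0"
  shows "\<forall>p\<in>U. Q0 F p =
      Bfun F p * I0 F p + cnj (Bfun F p) * cnj (I0 F p) - Bfun F p * cnj (Bfun F p)
      + 2/3 * complex_of_real (Re (Dz1 (\<lambda>q. Dzb1 (Dzb1 (slant F)) q / Dzb1 (slant F) q) p))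
      + 1/3 * complex_of_real (Re (Dzb1 (Pfun F) p))"
proof
  fix p assume p: "p \<in> U"
  interpret rigid_hypersurface_nonzero_slant_deriv U F
    using assms(1-3,5) by unfold_locales
  have kb: "kb p \<noteq> 0"
    using p kb_nonzero by blast
  from Q0_rational_identity[OF kb cnj_Dzb1_Pfun[OF p] Dz1_A[OF p] I0_eq[OF p] Bfun_eq[THEN fun_cong]
      Kop_cnj_Pfun[OF p] Kop_Dzb1_cnj_Pfun[OF p] Kop_V0[OF p] Dzb1_I0[OF p]]
  show "Q0 F p = Bfun F p * I0 F p + cnj (Bfun F p) * cnj (I0 F p) - Bfun F p * cnj (Bfun F p)
      + 2/3 * complex_of_real (Re (Dz1 (\<lambda>q. Dzb1 (Dzb1 (slant F)) q / Dzb1 (slant F) q) p))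
      + 1/3 * complex_of_real (Re (Dzb1 (Pfun F) p))"
    unfolding Q0_def .
qed

end
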